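(* Consider an $[[n,k]]$ stabilizer code with stabilizer group $\mathcal S$, Clifford encoder $U_E$ and a set of syndrome representatives $T$, with encoding channel $\mathcal U$ and decoding channel $\mathcal D$, and let $\mathcal N=\mathcal T_p^{\otimes n}$ be the $n$-qubit depolarizing channel with rate $p$. Then \[ F_C(\mathcal D\mathcal N\mathcal U)=\sum_{E\in T\times\mathcal S}p_E=\sum_{w=0}^n a_w q_w, \] where $a_w$ is the number of elements of $T\times\mathcal S=\{hg:h\in T,\ g\in\mathcal S\}$ (Pauli operators up to phase) of weight $w$, $p_E$ is the probability of the Pauli error $E$ under $\mathcal N$, and $q_w=(1-\frac34p)^{n-w}(\frac14p)^w$. That is, the channel fidelity is the weight enumerator of $T\times\mathcal S$ evaluated on the probabilities $\{q_w\}$.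
   Context: Channel fidelity: for a channel $\mathcal E$ on an $m$-dimensional space with Kraus operators $\{K_i\}$, $F_C(\mathcal E)=\langle\psi|(I\otimes\mathcal E)(|\psi\rangle\langle\psi|)|\psi\rangle=\frac1{m^2}\sum_i|\mathrm{tr}K_i|^2$ with $|\psi\rangle=m^{-1/2}\sum_j|j\rangle|j\rangle$. Code setup: Pauli operators are tensor products of $I,X,Y,Z$ (up to phase); weight is the number of non-identity factors. $U_E$ is an $n$-qubit Clifford unitary, and $\mathcal S$ is generated by $g_j=U_EZ_{j+k}U_E^\dagger$, $j=1,\dots,n-k$. The syndrome of a Pauli $E$ is $s\in\{0,1\}^{n-k}$, $s_j=0$ iff $E$ commutes with $g_j$; $P_s=\prod_j\frac{I+(-1)^{s_j}g_j}{2}$. $T$ contains one Pauli $E_s$ of syndrome $s$ for each $s$, with $E_0=I$, and $C_s=E_s$. Encoding: $\mathcal U(\rho)=U_E(\rho\otimes|0\rangle\langle0|^{\otimes n-k})U_E^\dagger$ on $k$-qubit states $\rho$. Decoding: $\mathcal D(\rho')=\mathrm{tr}_{\mathrm{anc}}\big(\sum_sU_E^\dagger C_sP_s\rho'P_sC_s^\dagger U_E\big)$, the partial trace being over the last $n-k$ (ancilla) qubits. The depolarizing channel $\mathcal T_p(\rho)=(1-\frac34p)\rho+\frac p4(X\rho X+Y\rho Y+Z\rho Z)$ acts independently on each of the $n$ qubits, so a Pauli error of weight $w$ occurs with probability $q_w$. *)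

theory Defs
  imports Complex_Main "Jordan_Normal_Form.Matrix"
begin

definition adj :: "complex mat \<Rightarrow> complex mat" where
  "adj A = mat (dim_col A) (dim_row A) (\<lambda>(i,j). cnj (A $$ (j,i)))"

definition msum :: "nat \<Rightarrow> ('i \<Rightarrow> complex mat) \<Rightarrow> 'i set \<Rightarrow> complex mat" where
  "msum d f A = mat d d (\<lambda>(r,c). \<Sum>x\<in>A. f x $$ (r,c))"

text \<open>Kronecker (tensor) product; the first factor is the most significant index.\<close>
definition kron :: "complex mat \<Rightarrow> complex mat \<Rightarrow> complex mat" where
  "kron A B = mat (dim_row A * dim_row B) (dim_col A * dim_col B)
     (\<lambda>(i,j). A $$ (i div dim_row B, j div dim_col B) * B $$ (i mod dim_row B, j mod dim_col B))"

definition ebasis :: "nat \<Rightarrow> nat \<Rightarrow> nat \<Rightarrow> complex mat" where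
  "ebasis d i j = mat d d (\<lambda>(r,c). if r = i \<and> c = j then 1 else 0)"

definition ptrace2 :: "nat \<Rightarrow> nat \<Rightarrow> complex mat \<Rightarrow> complex mat" where
  "ptrace2 a b M = mat a a (\<lambda>(i,j). \<Sum>l<b. M $$ (i*b + l, j*b + l))"

text \<open>Tensor product of two linear maps on matrices (dimensions a and b),
  defined by linear extension of (Phi (x) Psi)(|i><j| (x) |k><l|) = Phi(|i><j|) (x) Psi(|k><l|).\<close>
definition superop_tensor :: "nat \<Rightarrow> nat \<Rightarrow> (complex mat \<Rightarrow> complex mat) \<Rightarrow> (complex mat \<Rightarrow> complex mat)
    \<Rightarrow> complex mat \<Rightarrow> complex mat" where
  "superop_tensor a b \<Phi> \<Psi> M =
     msum (a*b) (\<lambda>((i,j),(k,l)). M $$ (i*b + k, j*b + l) \<cdot>\<^sub>m kron (\<Phi> (ebasis a i j)) (\<Psi> (ebasis b k l)))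
       (({..<a} \<times> {..<a}) \<times> ({..<b} \<times> {..<b}))"

text \<open>Maximally entangled vector psi = m^(-1/2) sum_j |j>|j> in dimension m*m.\<close>
definition max_ent :: "nat \<Rightarrow> nat \<Rightarrow> complex" where
  "max_ent m x = (if x div m = x mod m then complex_of_real (1 / sqrt (real m)) else 0)"

definition chan_fid :: "nat \<Rightarrow> (complex mat \<Rightarrow> complex mat) \<Rightarrow> complex" where
  "chan_fid m \<E> =
     (let \<rho> = mat (m*m) (m*m) (\<lambda>(x,y). max_ent m x * cnj (max_ent m y));
          \<sigma> = superop_tensor m m (\<lambda>M. M) \<E> \<rho>
      in \<Sum>x<m*m. \<Sum>y<m*m. cnj (max_ent m x) * \<sigma> $$ (x,y) * max_ent m y)"

datatype pauli = PI | PX | PY | PZ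

definition pauli_mat :: "pauli \<Rightarrow> complex mat" where
  "pauli_mat a = (case a of
      PI \<Rightarrow> mat_of_rows_list 2 [[1, 0], [0, 1]]
    | PX \<Rightarrow> mat_of_rows_list 2 [[0, 1], [1, 0]]
    | PY \<Rightarrow> mat_of_rows_list 2 [[0, -\<i>], [\<i>, 0]]
    | PZ \<Rightarrow> mat_of_rows_list 2 [[1, 0], [0, -1]])"

text \<open>Matrix of a tensor product of Paulis; list position 0 is qubit 1.\<close>
fun pmat :: "pauli list \<Rightarrow> complex mat" where
  "pmat [] = 1\<^sub>m 1"
| "pmat (a # xs) = kron (pauli_mat a) (pmat xs)"

definition paulis :: "nat \<Rightarrow> pauli list set" where
  "paulis n = {P. length P = n}"

definition weight :: "pauli list \<Rightarrow> nat" where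
  "weight P = length (filter (\<lambda>a. a \<noteq> PI) P)"

text \<open>Z on qubit i (1-indexed), identity elsewhere.\<close>
definition Z_at :: "nat \<Rightarrow> nat \<Rightarrow> pauli list" where
  "Z_at n i = map (\<lambda>t. if t + 1 = i then PZ else PI) [0..<n]"

definition unitary_mat :: "nat \<Rightarrow> complex mat \<Rightarrow> bool" where
  "unitary_mat d U \<longleftrightarrow> U \<in> carrier_mat d d \<and> adj U * U = 1\<^sub>m d \<and> U * adj U = 1\<^sub>m d"

definition clifford :: "nat \<Rightarrow> complex mat \<Rightarrow> bool" where
  "clifford n U \<longleftrightarrow> unitary_mat (2^n) U \<and>
     (\<forall>P\<in>paulis n. \<exists>Q\<in>paulis n. \<exists>c. cmod c = 1 \<and> U * pmat P * adj U = c \<cdot>\<^sub>m pmat Q)"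

definition gen :: "nat \<Rightarrow> nat \<Rightarrow> complex mat \<Rightarrow> nat \<Rightarrow> complex mat" where
  "gen n k U j = U * pmat (Z_at n (j + k)) * adj U"

inductive_set stabilizer :: "nat \<Rightarrow> nat \<Rightarrow> complex mat \<Rightarrow> complex mat set" for n k U where
  one: "1\<^sub>m (2^n) \<in> stabilizer n k U"
| mul: "M \<in> stabilizer n k U \<Longrightarrow> j \<in> {1..n-k} \<Longrightarrow> M * gen n k U j \<in> stabilizer n k U"
| mul_inv: "M \<in> stabilizer n k U \<Longrightarrow> j \<in> {1..n-k} \<Longrightarrow> M * adj (gen n k U j) \<in> stabilizer n k U"

text \<open>Syndromes are bit strings (True = 1) of length n-k; entry j-1 is s_j.\<close>
definition syndromes :: "nat \<Rightarrow> bool list set" where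
  "syndromes m = {s. length s = m}"

definition syndrome :: "nat \<Rightarrow> nat \<Rightarrow> complex mat \<Rightarrow> pauli list \<Rightarrow> bool list" where
  "syndrome n k U E = map (\<lambda>j. \<not> (pmat E * gen n k U j = gen n k U j * pmat E)) [1..<n-k+1]"

definition proj :: "nat \<Rightarrow> nat \<Rightarrow> complex mat \<Rightarrow> bool list \<Rightarrow> complex mat" where
  "proj n k U s = foldr (\<lambda>j M. ((1/2) \<cdot>\<^sub>m (1\<^sub>m (2^n) + (if s ! (j - 1) then -1 else 1) \<cdot>\<^sub>m gen n k U j)) * M)
      [1..<n-k+1] (1\<^sub>m (2^n))"

text \<open>The set T of syndrome representatives, given by a selection function s \<mapsto> E_s.\<close>
definition syndrome_reps :: "nat \<Rightarrow> nat \<Rightarrow> complex mat \<Rightarrow> (bool list \<Rightarrow> pauli list) \<Rightarrow> bool" where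
  "syndrome_reps n k U Es \<longleftrightarrow>
     (\<forall>s\<in>syndromes (n-k). Es s \<in> paulis n \<and> syndrome n k U (Es s) = s) \<and>
     Es (replicate (n-k) False) = replicate n PI"

definition rep_set :: "nat \<Rightarrow> (bool list \<Rightarrow> pauli list) \<Rightarrow> pauli list set" where
  "rep_set m Es = Es ` syndromes m"

definition TS_set :: "nat \<Rightarrow> nat \<Rightarrow> complex mat \<Rightarrow> (bool list \<Rightarrow> pauli list) \<Rightarrow> pauli list set" where
  "TS_set n k U Es = {Q \<in> paulis n. \<exists>h\<in>rep_set (n-k) Es. \<exists>g\<in>stabilizer n k U. \<exists>c.
       c \<noteq> 0 \<and> pmat h * g = c \<cdot>\<^sub>m pmat Q}"

fun zero_proj :: "nat \<Rightarrow> complex mat" where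
  "zero_proj 0 = 1\<^sub>m 1"
| "zero_proj (Suc m) = kron (ebasis 2 0 0) (zero_proj m)"

definition encode :: "nat \<Rightarrow> nat \<Rightarrow> complex mat \<Rightarrow> complex mat \<Rightarrow> complex mat" where
  "encode n k U \<rho> = U * kron \<rho> (zero_proj (n-k)) * adj U"

definition decode :: "nat \<Rightarrow> nat \<Rightarrow> complex mat \<Rightarrow> (bool list \<Rightarrow> pauli list) \<Rightarrow> complex mat \<Rightarrow> complex mat" where
  "decode n k U Es \<rho>' = ptrace2 (2^k) (2^(n-k))
     (msum (2^n) (\<lambda>s. adj U * pmat (Es s) * proj n k U s * \<rho>' * proj n k U s * adj (pmat (Es s)) * U)
        (syndromes (n-k)))"

definition depol1 :: "real \<Rightarrow> complex mat \<Rightarrow> complex mat" where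
  "depol1 p \<rho> = complex_of_real (1 - 3/4 * p) \<cdot>\<^sub>m \<rho> +
     complex_of_real (p/4) \<cdot>\<^sub>m (pauli_mat PX * \<rho> * pauli_mat PX + pauli_mat PY * \<rho> * pauli_mat PY
        + pauli_mat PZ * \<rho> * pauli_mat PZ)"

fun depol :: "nat \<Rightarrow> real \<Rightarrow> complex mat \<Rightarrow> complex mat" where
  "depol 0 p = (\<lambda>\<rho>. \<rho>)"
| "depol (Suc n) p = superop_tensor 2 (2^n) (depol1 p) (depol n p)"

definition perr :: "real \<Rightarrow> pauli list \<Rightarrow> real" where
  "perr p E = (\<Prod>a\<leftarrow>E. if a = PI then 1 - 3/4 * p else p/4)"

end

theory Submission
  imports Defs
begin

text \<open>
  The depolarizing channel is the mixture of the Pauli errors E with weights p(E), so the fidelity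
  is the p(E)-weighted sum of the fidelities of the individual error branches. On the code space
  an error E is a joint eigenvector of the generators, with signs given by its syndrome s(E); hence
  only the projection P(s(E)) survives, and the decoder leaves the residual operator
  R(E) = adj U E(s(E)) E U. As U is Clifford, R(E) is a Pauli string up to phase, and since E(s(E)) E
  commutes with every generator, R(E) is I or Z on each ancilla. The branch of E then contributes
  |tr R'|^2 / 4^k, where R' is the data part of R(E): this is 1 if R' is trivial, i.e. if E(s(E)) E
  lies in the stabilizer, i.e. if E \<in> T \<times> S, and 0 otherwise. Grouping the sum of p(E) over
  T \<times> S by weight gives the weight enumerator.
\<close>

section \<open>Matrices\<close>

lemma index_mult_mat_sum:
  assumes "A \<in> carrier_mat n m" "B \<in> carrier_mat m l" "i < n" "j < l"
  shows "(A * B) $$ (i,j) = (\<Sum>u<m. A $$ (i,u) * B $$ (u,j))"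
  using assms by (auto simp: scalar_prod_def atLeast0LessThan intro!: sum.cong)

lemma index_mult_mat_triple:
  assumes "A \<in> carrier_mat n d" "M \<in> carrier_mat d d" "A' \<in> carrier_mat d m" "x < n" "y < m"
  shows "(A * M * A') $$ (x,y) = (\<Sum>u<d. \<Sum>v<d. A $$ (x,u) * M $$ (u,v) * A' $$ (v,y))"
proof -
  have "(A * M * A') $$ (x,y) = (\<Sum>v<d. (A * M) $$ (x,v) * A' $$ (v,y))"
    by (rule index_mult_mat_sum) (use assms in auto)
  also have "\<dots> = (\<Sum>v<d. (\<Sum>u<d. A $$ (x,u) * M $$ (u,v)) * A' $$ (v,y))"
    using assms by (intro sum.cong refl) (subst index_mult_mat_sum[of _ n d _ d], auto)
  finally show ?thesis
    by (simp add: sum_distrib_right) (rule sum.swap)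
qed

lemma sum_lessThan_mult: "(\<Sum>u<a*b. f u) = (\<Sum>i<a. \<Sum>k<b. f (i*b + k :: nat))"
proof (induction a)
  case (Suc a)
  have "(\<Sum>u<Suc a * b. f u) = (\<Sum>u<a*b. f u) + (\<Sum>u\<in>{a*b..<a*b+b}. f u)"
    by (simp add: sum.atLeastLessThan_concat[symmetric] lessThan_atLeast0 add.commute)
  also have "(\<Sum>u\<in>{a*b..<a*b+b}. f u) = (\<Sum>k<b. f (a*b + k))"
    using sum.shift_bounds_nat_ivl[of f 0 "a*b" b] by (simp add: lessThan_atLeast0 add.commute)
  finally show ?case using Suc by simp
qed simp

lemma sum_cartesian: "(\<Sum>x\<in>A \<times> B. h x) = (\<Sum>a\<in>A. \<Sum>b\<in>B. h (a,b))"
  by (simp add: sum.cartesian_product split_def)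

lemma mult_add_div_mod:
  assumes "i < (a::nat)" "k < b"
  shows "(i*b + k) div b = i" "(i*b + k) mod b = k" "i*b + k < a*b"
proof -
  have "i*b + k < Suc i * b" using assms by simp
  also have "\<dots> \<le> a*b" using assms by (intro mult_le_mono1) simp
  finally show "i*b + k < a*b" .
qed (use assms in simp_all)

lemma div_mod_less_of_less_mult: "(i::nat) < a*b \<Longrightarrow> i div b < a \<and> i mod b < b"
  by (metis less_mult_imp_div_less mod_less_divisor mult.commute mult_0_right not_less_zero gr0I)

lemma nat_eq_iff_div_mod_eq: "((i::nat) = j) = (i div b = j div b \<and> i mod b = j mod b)"
  by (metis div_mult_mod_eq)

lemma smult_smult_mat: "a \<cdot>\<^sub>m (b \<cdot>\<^sub>m A) = (a * b :: complex) \<cdot>\<^sub>m A"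
  by (rule eq_matI) auto

lemma one_smult_mat [simp]: "(1::complex) \<cdot>\<^sub>m A = A"
  by (rule eq_matI) auto

lemma smult_mat_cancel:
  assumes "(c::complex) \<noteq> 0" "c \<cdot>\<^sub>m A = c \<cdot>\<^sub>m B"
  shows "A = B"
proof -
  have "(1/c) \<cdot>\<^sub>m (c \<cdot>\<^sub>m A) = (1/c) \<cdot>\<^sub>m (c \<cdot>\<^sub>m B)" using assms(2) by simp
  then show ?thesis using assms(1) by (simp add: smult_smult_mat)
qed

lemma square_mat_neq_uminus:
  assumes "X \<in> carrier_mat N N" "Y \<in> carrier_mat N N" "X * Y = 1\<^sub>m N" "N > 0"
  shows "X \<noteq> (-1::complex) \<cdot>\<^sub>m X"
proof
  assume neg: "X = (-1) \<cdot>\<^sub>m X"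
  have "X = 0\<^sub>m N N"
  proof (rule eq_matI)
    fix i j assume "i < dim_row (0\<^sub>m N N)" "j < dim_col (0\<^sub>m N N)"
    moreover have "X $$ (i,j) = ((-1::complex) \<cdot>\<^sub>m X) $$ (i,j)" using neg by simp
    ultimately show "X $$ (i,j) = 0\<^sub>m N N $$ (i,j)" using assms(1) by auto
  qed (use assms in auto)
  then have "(0\<^sub>m N N :: complex mat) = 1\<^sub>m N" using assms by simp
  then have "(0\<^sub>m N N :: complex mat) $$ (0,0) = 1\<^sub>m N $$ (0,0)" by simp
  then show False using assms(4) by simp
qed

lemma square_mult_carrier_mat [simp]:
  "A \<in> carrier_mat d d \<Longrightarrow> B \<in> carrier_mat d m \<Longrightarrow> A * B \<in> carrier_mat d m"
  by (rule mult_carrier_mat)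

lemma smult_sandwich:
  fixes c :: complex
  assumes "A \<in> carrier_mat n n" "X \<in> carrier_mat n n" "B \<in> carrier_mat n n"
  shows "A * (c \<cdot>\<^sub>m X) * B = c \<cdot>\<^sub>m (A * X * B)"
  using assms mult_smult_distrib[of A n n X n c] mult_smult_assoc_mat[of "A * X" n n B n c] by simp

lemma commute_smult_iff:
  assumes "(c::complex) \<noteq> 0" "X \<in> carrier_mat d d" "G \<in> carrier_mat d d"
  shows "(c \<cdot>\<^sub>m X) * G = G * (c \<cdot>\<^sub>m X) \<longleftrightarrow> X * G = G * X"
  using assms smult_mat_cancel[OF assms(1)]
  by (auto simp: mult_smult_assoc_mat[of _ d d _ d] mult_smult_distrib[of _ d d _ d])

lemma commute_mult_involution_iff:
  fixes X G g :: "complex mat"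
  assumes "X \<in> carrier_mat d d" "G \<in> carrier_mat d d" "g \<in> carrier_mat d d"
    and "g * G = G * g" "g * g = 1\<^sub>m d"
  shows "(X * g) * G = G * (X * g) \<longleftrightarrow> X * G = G * X"
proof -
  have "(X * g) * G = (X * G) * g" "G * (X * g) = (G * X) * g"
    using assms by (simp_all add: assoc_mult_mat[of _ d d _ d _ d])
  moreover have "A * g * g = A" if "A \<in> carrier_mat d d" for A
    using assoc_mult_mat[OF that assms(3,3)] right_mult_one_mat[OF that] assms(5) by simp
  ultimately show ?thesis using assms by (metis mult_carrier_mat)
qed

lemma kron_carrier [simp]:
  "kron A B \<in> carrier_mat (dim_row A * dim_row B) (dim_col A * dim_col B)"
  by (simp add: kron_def)

lemma kron_dims [simp]:
  "dim_row (kron A B) = dim_row A * dim_row B" "dim_col (kron A B) = dim_col A * dim_col B"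
  by (simp_all add: kron_def)

lemma index_kron [simp]:
  "i < dim_row A * dim_row B \<Longrightarrow> j < dim_col A * dim_col B \<Longrightarrow>
   kron A B $$ (i,j) = A $$ (i div dim_row B, j div dim_col B) * B $$ (i mod dim_row B, j mod dim_col B)"
  by (simp add: kron_def)

lemma kron_mult:
  assumes "A \<in> carrier_mat a a'" "C \<in> carrier_mat a' a''" "B \<in> carrier_mat b b'" "D \<in> carrier_mat b' b''"
  shows "kron A B * kron C D = kron (A * C) (B * D)"
proof (rule eq_matI)
  fix i j assume "i < dim_row (kron (A*C) (B*D))" "j < dim_col (kron (A*C) (B*D))"
  then have ij: "i < a*b" "j < a''*b''" using assms by auto
  have i: "i div b < a" "i mod b < b" and j: "j div b'' < a''" "j mod b'' < b''"
    using ij div_mod_less_of_less_mult by auto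
  have "(kron A B * kron C D) $$ (i,j) = (\<Sum>u<a'*b'. kron A B $$ (i,u) * kron C D $$ (u,j))"
    by (rule index_mult_mat_sum[of _ "a*b" "a'*b'" _ "a''*b''"]) (use assms ij in auto)
  also have "\<dots> = (\<Sum>x<a'. \<Sum>y<b'. (A $$ (i div b, x) * C $$ (x, j div b'')) * (B $$ (i mod b, y) * D $$ (y, j mod b'')))"
    unfolding sum_lessThan_mult using assms ij by (intro sum.cong refl) (auto simp: mult_add_div_mod)
  also have "\<dots> = (\<Sum>x<a'. A $$ (i div b, x) * C $$ (x, j div b'')) * (\<Sum>y<b'. B $$ (i mod b, y) * D $$ (y, j mod b''))"
    by (simp add: sum_product)
  also have "\<dots> = (A*C) $$ (i div b, j div b'') * (B*D) $$ (i mod b, j mod b'')"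
    by (simp only: index_mult_mat_sum[OF assms(1,2) i(1) j(1)] index_mult_mat_sum[OF assms(3,4) i(2) j(2)])
  also have "\<dots> = kron (A*C) (B*D) $$ (i,j)"
    using assms ij by simp
  finally show "(kron A B * kron C D) $$ (i,j) = kron (A*C) (B*D) $$ (i,j)" .
qed (use assms in auto)

lemma kron_smult_left: "kron (c \<cdot>\<^sub>m A) B = c \<cdot>\<^sub>m kron A B"
  by (rule eq_matI) (auto simp: kron_def dest!: div_mod_less_of_less_mult)

lemma kron_smult_right: "kron A (c \<cdot>\<^sub>m B) = c \<cdot>\<^sub>m kron A B"
  by (rule eq_matI) (auto simp: kron_def dest!: div_mod_less_of_less_mult)

lemma kron_one: "kron (1\<^sub>m a) (1\<^sub>m b) = 1\<^sub>m (a*b)"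
proof (rule eq_matI)
  fix i j assume "i < dim_row (1\<^sub>m (a*b))" "j < dim_col (1\<^sub>m (a*b))"
  then have "i < a*b" "j < a*b" by auto
  then show "kron (1\<^sub>m a) (1\<^sub>m b) $$ (i,j) = 1\<^sub>m (a*b) $$ (i,j)"
    using div_mod_less_of_less_mult nat_eq_iff_div_mod_eq[of i j b] by auto
qed auto

lemma kron_one_1_left: "kron (1\<^sub>m 1) A = A"
  by (rule eq_matI) (auto simp: kron_def)

lemma kron_assoc: "kron (kron A B) C = kron A (kron B C)"
proof (rule eq_matI)
  fix i j assume "i < dim_row (kron A (kron B C))" "j < dim_col (kron A (kron B C))"
  then have i: "i < dim_row A * (dim_row B * dim_row C)" and j: "j < dim_col A * (dim_col B * dim_col C)"
    by auto
  then have pos: "dim_row B > 0" "dim_row C > 0" "dim_col B > 0" "dim_col C > 0" by (auto intro!: gr0I)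
  have div_mod: "x div c div b = x div (b*c)" "x mod (b*c) div c = x div c mod b" "x mod (b*c) mod c = x mod c"
    if "c > 0" for x b c :: nat
  proof -
    have e: "x mod (b*c) = c * (x div c mod b) + x mod c" by (metis mod_mult2_eq mult.commute)
    show "x div c div b = x div (b*c)" by (metis div_mult2_eq mult.commute)
    show "x mod (b*c) div c = x div c mod b" "x mod (b*c) mod c = x mod c" unfolding e using that by simp_all
  qed
  have i': "i div dim_row C < dim_row A * dim_row B" "i mod (dim_row B * dim_row C) < dim_row B * dim_row C"
    using i pos by (simp_all add: less_mult_imp_div_less mult.assoc)
  have j': "j div dim_col C < dim_col A * dim_col B" "j mod (dim_col B * dim_col C) < dim_col B * dim_col C"
    using j pos by (simp_all add: less_mult_imp_div_less mult.assoc)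
  have "kron (kron A B) C $$ (i,j) = A $$ (i div dim_row C div dim_row B, j div dim_col C div dim_col B)
     * B $$ (i div dim_row C mod dim_row B, j div dim_col C mod dim_col B) * C $$ (i mod dim_row C, j mod dim_col C)"
    using i j i' j' by (simp add: mult.assoc)
  also have "\<dots> = A $$ (i div (dim_row B * dim_row C), j div (dim_col B * dim_col C))
     * (B $$ (i mod (dim_row B * dim_row C) div dim_row C, j mod (dim_col B * dim_col C) div dim_col C)
      * C $$ (i mod (dim_row B * dim_row C) mod dim_row C, j mod (dim_col B * dim_col C) mod dim_col C))"
    using pos by (simp only: div_mod mult.assoc)
  also have "\<dots> = kron A (kron B C) $$ (i,j)"
    using i j i' j' by simp
  finally show "kron (kron A B) C $$ (i,j) = kron A (kron B C) $$ (i,j)" .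
qed auto

lemma kron_ebasis:
  assumes "i < a" "j < a" "i' < b" "j' < b"
  shows "kron (ebasis a i j) (ebasis b i' j') = ebasis (a*b) (i*b + i') (j*b + j')"
proof (rule eq_matI)
  fix r c assume "r < dim_row (ebasis (a*b) (i*b+i') (j*b+j'))" "c < dim_col (ebasis (a*b) (i*b+i') (j*b+j'))"
  then have rc: "r < a*b" "c < a*b" by (auto simp: ebasis_def)
  show "kron (ebasis a i j) (ebasis b i' j') $$ (r,c) = ebasis (a*b) (i*b+i') (j*b+j') $$ (r,c)"
    using rc div_mod_less_of_less_mult assms mult_add_div_mod
      nat_eq_iff_div_mod_eq[of r "i*b+i'" b] nat_eq_iff_div_mod_eq[of c "j*b+j'" b]
    by (auto simp: ebasis_def)
qed (auto simp: ebasis_def)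

lemma trace_kron:
  assumes "A \<in> carrier_mat a a" "B \<in> carrier_mat b b"
  shows "(\<Sum>i<a*b. kron A B $$ (i,i)) = (\<Sum>i<a. A $$ (i,i)) * (\<Sum>i<b. B $$ (i,i))"
  using assms by (simp add: sum_lessThan_mult sum_product mult_add_div_mod)

lemma index_kron_sandwich:
  assumes "A \<in> carrier_mat a a" "A' \<in> carrier_mat a a" "B \<in> carrier_mat b b" "B' \<in> carrier_mat b b"
    and "M \<in> carrier_mat (a*b) (a*b)" "r < a*b" "s < a*b"
  shows "(kron A B * M * kron A' B') $$ (r,s)
     = (\<Sum>i<a. \<Sum>k<b. \<Sum>j<a. \<Sum>l<b. A $$ (r div b, i) * B $$ (r mod b, k)
          * M $$ (i*b+k, j*b+l) * (A' $$ (j, s div b) * B' $$ (l, s mod b)))"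
    (is "_ = ?rhs")
proof -
  have K: "kron A B \<in> carrier_mat (a*b) (a*b)" "kron A' B' \<in> carrier_mat (a*b) (a*b)"
    using assms(1-4) kron_carrier by (metis carrier_matD)+
  have "(kron A B * M * kron A' B') $$ (r,s)
      = (\<Sum>u<a*b. \<Sum>v<a*b. kron A B $$ (r,u) * M $$ (u,v) * kron A' B' $$ (v,s))"
    by (rule index_mult_mat_triple[OF K(1) assms(5) K(2) assms(6,7)])
  also have "\<dots> = (\<Sum>i<a. \<Sum>k<b. \<Sum>j<a. \<Sum>l<b.
      kron A B $$ (r, i*b+k) * M $$ (i*b+k, j*b+l) * kron A' B' $$ (j*b+l, s))"
    by (simp only: sum_lessThan_mult)
  also have "\<dots> = ?rhs"
    using assms by (intro sum.cong refl) (simp add: mult_add_div_mod mult_ac)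
  finally show ?thesis .
qed

lemma adj_carrier [simp]: "A \<in> carrier_mat n m \<Longrightarrow> adj A \<in> carrier_mat m n"
  by (auto simp: adj_def)

lemma adj_dims [simp]: "dim_row (adj A) = dim_col A" "dim_col (adj A) = dim_row A"
  by (auto simp: adj_def)

lemma index_adj [simp]: "i < dim_col A \<Longrightarrow> j < dim_row A \<Longrightarrow> adj A $$ (i,j) = cnj (A $$ (j,i))"
  by (auto simp: adj_def)

lemma adj_smult: "adj (c \<cdot>\<^sub>m A) = cnj c \<cdot>\<^sub>m adj A"
  by (rule eq_matI) auto

lemma adj_add: "A \<in> carrier_mat n m \<Longrightarrow> B \<in> carrier_mat n m \<Longrightarrow> adj (A + B) = adj A + adj B"
  by (rule eq_matI) auto

lemma adj_one [simp]: "adj (1\<^sub>m n) = 1\<^sub>m n"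
  by (rule eq_matI) auto

lemma adj_mult:
  assumes "A \<in> carrier_mat n m" "B \<in> carrier_mat m l"
  shows "adj (A * B) = adj B * adj A"
proof (rule eq_matI)
  fix i j assume "i < dim_row (adj B * adj A)" "j < dim_col (adj B * adj A)"
  then have ij: "i < l" "j < n" using assms by auto
  have "adj (A * B) $$ (i,j) = cnj ((A * B) $$ (j,i))" using assms ij by simp
  also have "\<dots> = cnj (\<Sum>u<m. A $$ (j,u) * B $$ (u,i))" by (simp only: index_mult_mat_sum[OF assms ij(2) ij(1)])
  also have "\<dots> = (\<Sum>u<m. adj B $$ (i,u) * adj A $$ (u,j))"
    using assms ij by (simp add: mult.commute)
  also have "\<dots> = (adj B * adj A) $$ (i,j)"
    by (rule index_mult_mat_sum[symmetric]) (use assms ij in auto)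
  finally show "adj (A * B) $$ (i,j) = (adj B * adj A) $$ (i,j)" .
qed (use assms in auto)

lemma adj_kron: "adj (kron A B) = kron (adj A) (adj B)"
  by (rule eq_matI) (auto simp: kron_def adj_def dest!: div_mod_less_of_less_mult)

lemma adj_adj [simp]: "adj (adj A) = A"
  by (rule eq_matI) auto

lemma adj_foldr_mult:
  assumes "\<And>j. G j \<in> carrier_mat d d" "\<And>j. adj (G j) = G j"
  shows "adj (foldr (\<lambda>j M. G j * M) js (1\<^sub>m d)) = foldr (\<lambda>j M. G j * M) (rev js) (1\<^sub>m d)"
proof -
  have carrier: "foldr (\<lambda>j M. G j * M) xs (1\<^sub>m d) \<in> carrier_mat d d" for xs
    using assms by (induction xs) auto
  have shift: "foldr (\<lambda>j M. G j * M) xs A = foldr (\<lambda>j M. G j * M) xs (1\<^sub>m d) * A"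
    if "A \<in> carrier_mat d d" for xs A
    using that carrier assms by (induction xs) (auto simp: assoc_mult_mat[of _ d d _ d _ d])
  show ?thesis
  proof (induction js)
    case (Cons j js)
    have "adj (foldr (\<lambda>j M. G j * M) (j # js) (1\<^sub>m d)) = adj (foldr (\<lambda>j M. G j * M) js (1\<^sub>m d)) * G j"
      using carrier[of js] assms by (simp add: adj_mult[of _ d d _ d])
    also have "\<dots> = foldr (\<lambda>j M. G j * M) (rev js) (G j)"
      using Cons shift[of "G j" "rev js"] assms by simp
    finally show ?case using right_mult_one_mat[OF assms(1)[of j]] by simp
  qed simp
qed

section \<open>Pauli operators\<close>

fun pauli_times :: "pauli \<Rightarrow> pauli \<Rightarrow> pauli" where
  "pauli_times PI b = b"
| "pauli_times a PI = a"
| "pauli_times PX PX = PI" | "pauli_times PX PY = PZ" | "pauli_times PX PZ = PY"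
| "pauli_times PY PX = PZ" | "pauli_times PY PY = PI" | "pauli_times PY PZ = PX"
| "pauli_times PZ PX = PY" | "pauli_times PZ PY = PX" | "pauli_times PZ PZ = PI"

lemma pauli_times_eq_PI_iff: "pauli_times a b = PI \<longleftrightarrow> a = b"
  by (cases a; cases b) auto

fun pauli_phase :: "pauli \<Rightarrow> pauli \<Rightarrow> complex" where
  "pauli_phase PX PY = \<i>" | "pauli_phase PY PX = -\<i>"
| "pauli_phase PY PZ = \<i>" | "pauli_phase PZ PY = -\<i>"
| "pauli_phase PZ PX = \<i>" | "pauli_phase PX PZ = -\<i>"
| "pauli_phase _ _ = 1"

definition pauli_sign :: "pauli \<Rightarrow> pauli \<Rightarrow> complex" where
  "pauli_sign a b = (if a = PI \<or> b = PI \<or> a = b then 1 else -1)"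

lemma UNIV_pauli: "(UNIV :: pauli set) = {PI, PX, PY, PZ}"
  using pauli.exhaust by auto

lemma finite_UNIV_pauli [simp]: "finite (UNIV :: pauli set)"
  by (simp add: UNIV_pauli)

lemma pauli_mat_carrier [simp]: "pauli_mat a \<in> carrier_mat 2 2"
  by (cases a) (auto simp: pauli_mat_def mat_of_rows_list_def)

lemma pauli_mat_dims [simp]: "dim_row (pauli_mat a) = 2" "dim_col (pauli_mat a) = 2"
  by (cases a; simp add: pauli_mat_def mat_of_rows_list_def)+

lemma less_2_cases: "(i::nat) < 2 \<longleftrightarrow> i = 0 \<or> i = 1"
  by auto

lemma index_pauli_mat:
  "pauli_mat PI $$ (0,0) = 1" "pauli_mat PI $$ (0,Suc 0) = 0" "pauli_mat PI $$ (Suc 0,0) = 0" "pauli_mat PI $$ (Suc 0,Suc 0) = 1"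
  "pauli_mat PX $$ (0,0) = 0" "pauli_mat PX $$ (0,Suc 0) = 1" "pauli_mat PX $$ (Suc 0,0) = 1" "pauli_mat PX $$ (Suc 0,Suc 0) = 0"
  "pauli_mat PY $$ (0,0) = 0" "pauli_mat PY $$ (0,Suc 0) = -\<i>" "pauli_mat PY $$ (Suc 0,0) = \<i>" "pauli_mat PY $$ (Suc 0,Suc 0) = 0"
  "pauli_mat PZ $$ (0,0) = 1" "pauli_mat PZ $$ (0,Suc 0) = 0" "pauli_mat PZ $$ (Suc 0,0) = 0" "pauli_mat PZ $$ (Suc 0,Suc 0) = -1"
  by (simp_all add: pauli_mat_def mat_of_rows_list_def)

lemma index_pauli_mat_mult:
  "i < 2 \<Longrightarrow> j < 2 \<Longrightarrow>
   (pauli_mat a * pauli_mat b) $$ (i,j) = pauli_mat a $$ (i,0) * pauli_mat b $$ (0,j) + pauli_mat a $$ (i,Suc 0) * pauli_mat b $$ (Suc 0,j)"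
  by (subst index_mult_mat_sum[of _ 2 2 _ 2]) (auto simp: numeral_2_eq_2)

lemma pauli_mat_mult: "pauli_mat a * pauli_mat b = pauli_phase a b \<cdot>\<^sub>m pauli_mat (pauli_times a b)"
proof (rule eq_matI)
  fix i j assume "i < dim_row (pauli_phase a b \<cdot>\<^sub>m pauli_mat (pauli_times a b))"
    "j < dim_col (pauli_phase a b \<cdot>\<^sub>m pauli_mat (pauli_times a b))"
  then have ij: "i < 2" "j < 2" by auto
  then show "(pauli_mat a * pauli_mat b) $$ (i,j) = (pauli_phase a b \<cdot>\<^sub>m pauli_mat (pauli_times a b)) $$ (i,j)"
    unfolding less_2_cases
    by (cases a; cases b) (auto simp: index_pauli_mat index_pauli_mat_mult simp del: index_mult_mat)
qed auto

lemma pauli_mat_commute: "pauli_mat a * pauli_mat b = pauli_sign a b \<cdot>\<^sub>m (pauli_mat b * pauli_mat a)"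
proof (rule eq_matI)
  fix i j assume "i < dim_row (pauli_sign a b \<cdot>\<^sub>m (pauli_mat b * pauli_mat a))"
    "j < dim_col (pauli_sign a b \<cdot>\<^sub>m (pauli_mat b * pauli_mat a))"
  then have ij: "i < 2" "j < 2" by auto
  then show "(pauli_mat a * pauli_mat b) $$ (i,j) = (pauli_sign a b \<cdot>\<^sub>m (pauli_mat b * pauli_mat a)) $$ (i,j)"
    unfolding less_2_cases
    by (cases a; cases b)
      (auto simp: index_pauli_mat index_pauli_mat_mult pauli_sign_def index_mult_mat(2,3) simp del: index_mult_mat(1))
qed auto

lemma pauli_mat_PI: "pauli_mat PI = 1\<^sub>m 2"
  by (rule eq_matI) (auto simp: less_2_cases index_pauli_mat)

lemma adj_pauli_mat: "adj (pauli_mat a) = pauli_mat a"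
  by (rule eq_matI) (auto simp: less_2_cases, (cases a; auto simp: index_pauli_mat)+)

lemma pauli_mat_trace: "(\<Sum>i<2. pauli_mat a $$ (i,i)) = (if a = PI then 2 else 0)"
  by (cases a) (auto simp: numeral_2_eq_2 pauli_mat_def mat_of_rows_list_def)

definition ptimes :: "pauli list \<Rightarrow> pauli list \<Rightarrow> pauli list" where
  "ptimes P Q = map2 pauli_times P Q"

definition pphase :: "pauli list \<Rightarrow> pauli list \<Rightarrow> complex" where
  "pphase P Q = prod_list (map2 pauli_phase P Q)"

definition psign :: "pauli list \<Rightarrow> pauli list \<Rightarrow> complex" where
  "psign P Q = prod_list (map2 pauli_sign P Q)"

lemma ptimes_simps [simp]:
  "ptimes [] [] = []" "ptimes (a # P) (b # Q) = pauli_times a b # ptimes P Q"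
  by (simp_all add: ptimes_def)

lemma pphase_simps [simp]:
  "pphase [] [] = 1" "pphase (a # P) (b # Q) = pauli_phase a b * pphase P Q"
  by (simp_all add: pphase_def)

lemma psign_simps [simp]:
  "psign [] [] = 1" "psign (a # P) (b # Q) = pauli_sign a b * psign P Q"
  by (simp_all add: psign_def)

lemma length_ptimes [simp]: "length (ptimes P Q) = min (length P) (length Q)"
  by (simp add: ptimes_def)

lemma pmat_carrier [simp]: "pmat P \<in> carrier_mat (2 ^ length P) (2 ^ length P)"
  by (induction P) auto

lemma pmat_dims [simp]: "dim_row (pmat P) = 2 ^ length P" "dim_col (pmat P) = 2 ^ length P"
  using pmat_carrier[of P] by (auto simp del: pmat_carrier)

lemma pmat_paulis [simp]: "P \<in> paulis n \<Longrightarrow> pmat P \<in> carrier_mat (2^n) (2^n)"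
  by (metis mem_Collect_eq paulis_def pmat_carrier)

lemma pmat_Cons_mult:
  assumes "length P = length Q"
  shows "pmat (a # P) * pmat (b # Q) = kron (pauli_mat a * pauli_mat b) (pmat P * pmat Q)"
  using assms by (simp, intro kron_mult) auto

lemma pmat_mult: "length P = length Q \<Longrightarrow> pmat P * pmat Q = pphase P Q \<cdot>\<^sub>m pmat (ptimes P Q)"
proof (induction P Q rule: list_induct2)
  case (Cons a P b Q)
  then show ?case
    using pmat_Cons_mult[OF Cons(1), of a b]
    by (simp add: pauli_mat_mult kron_smult_left kron_smult_right smult_smult_mat mult.commute)
qed simp

lemma pmat_commute: "length P = length Q \<Longrightarrow> pmat P * pmat Q = psign P Q \<cdot>\<^sub>m (pmat Q * pmat P)"
proof (induction P Q rule: list_induct2)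
  case (Cons a P b Q)
  then show ?case
    using pmat_Cons_mult[OF Cons(1), of a b] pmat_Cons_mult[OF Cons(1)[symmetric], of b a]
    by (simp add: pauli_mat_commute[of a b] kron_smult_left kron_smult_right smult_smult_mat mult.commute)
qed simp

lemma psign_cases: "length P = length Q \<Longrightarrow> psign P Q = 1 \<or> psign P Q = -1"
  by (induction P Q rule: list_induct2) (auto simp: pauli_sign_def)

lemma norm_pphase: "length P = length Q \<Longrightarrow> cmod (pphase P Q) = 1"
proof (induction P Q rule: list_induct2)
  case (Cons a P b Q)
  then show ?case by (cases a; cases b) (auto simp: norm_mult)
qed simp

lemma pmat_replicate_PI: "pmat (replicate k PI) = 1\<^sub>m (2^k)"
  by (induction k) (auto simp: pauli_mat_PI kron_one)

lemma adj_pmat: "adj (pmat P) = pmat P"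
  by (induction P) (auto simp: adj_kron adj_pauli_mat)

lemma pmat_square: "pmat P * pmat P = 1\<^sub>m (2 ^ length P)"
proof -
  have "ptimes P P = replicate (length P) PI"
  proof (induction P)
    case (Cons a P) then show ?case by (cases a) auto
  qed simp
  moreover have "pphase P P = 1"
  proof (induction P)
    case (Cons a P) then show ?case by (cases a) auto
  qed simp
  ultimately show ?thesis by (simp add: pmat_mult pmat_replicate_PI)
qed

lemma pmat_append: "pmat (P @ Q) = kron (pmat P) (pmat Q)"
  by (induction P) (auto simp: kron_one_1_left kron_assoc)

lemma pmat_commute_iff:
  assumes "length P = length Q"
  shows "pmat P * pmat Q = pmat Q * pmat P \<longleftrightarrow> psign P Q = 1"
proof
  let ?d = "2 ^ length P"
  have P: "pmat P \<in> carrier_mat ?d ?d" and Q: "pmat Q \<in> carrier_mat ?d ?d"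
    using assms pmat_carrier by metis+
  assume comm: "pmat P * pmat Q = pmat Q * pmat P"
  show "psign P Q = 1"
  proof (rule ccontr)
    assume "psign P Q \<noteq> 1"
    then have "pmat Q * pmat P = (-1) \<cdot>\<^sub>m (pmat Q * pmat P)"
      using comm pmat_commute[OF assms] psign_cases[OF assms] by metis
    moreover have "(pmat Q * pmat P) * (pmat P * pmat Q) = 1\<^sub>m ?d"
    proof -
      have "(pmat Q * pmat P) * (pmat P * pmat Q) = pmat Q * ((pmat P * pmat P) * pmat Q)"
        using assoc_mult_mat[OF Q P mult_carrier_mat[OF P Q]] assoc_mult_mat[OF P P Q] by simp
      then show ?thesis using Q assms by (simp add: pmat_square)
    qed
    ultimately show False
      using square_mat_neq_uminus[OF mult_carrier_mat[OF Q P] mult_carrier_mat[OF P Q]] by simp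
  qed
qed (use pmat_commute[OF assms] in simp)

lemma pmat_trace: "(\<Sum>i<2 ^ length P. pmat P $$ (i,i)) = (if set P \<subseteq> {PI} then 2 ^ length P else 0)"
proof (induction P)
  case (Cons a P)
  have "(\<Sum>i<2 ^ length (a # P). pmat (a # P) $$ (i,i))
      = (\<Sum>i<2. pauli_mat a $$ (i,i)) * (\<Sum>i<2 ^ length P. pmat P $$ (i,i))"
    using trace_kron[of "pauli_mat a" 2 "pmat P" "2 ^ length P"] by simp
  then show ?case using Cons by (auto simp: pauli_mat_trace)
qed simp

text \<open>For P \<noteq> Q the product of the two matrices is a non-identity Pauli string up to phase, hence traceless.\<close>

lemma pmat_smult_inj:
  assumes "length P = length Q" "c \<cdot>\<^sub>m pmat P = d \<cdot>\<^sub>m pmat Q" "c \<noteq> 0"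
  shows "P = Q"
proof (rule ccontr)
  assume "P \<noteq> Q"
  have "\<not> set (ptimes P Q) \<subseteq> {PI}"
  proof
    assume "set (ptimes P Q) \<subseteq> {PI}"
    then have "\<forall>i<length P. pauli_times (P!i) (Q!i) = PI"
      using assms(1) by (auto simp: ptimes_def set_conv_nth)
    then have "\<forall>i<length P. P!i = Q!i" by (simp add: pauli_times_eq_PI_iff)
    then show False using \<open>P \<noteq> Q\<close> assms(1) nth_equalityI by blast
  qed
  let ?n = "length P"
  have "pmat P * (c \<cdot>\<^sub>m pmat P) = c \<cdot>\<^sub>m (pmat P * pmat P)"
    by (rule mult_smult_distrib) auto
  then have "c \<cdot>\<^sub>m 1\<^sub>m (2^?n) = pmat P * (c \<cdot>\<^sub>m pmat P)"
    by (simp add: pmat_square)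
  also have "\<dots> = d \<cdot>\<^sub>m (pmat P * pmat Q)"
    unfolding assms(2) by (rule mult_smult_distrib) (use assms(1) in auto)
  also have "\<dots> = (d * pphase P Q) \<cdot>\<^sub>m pmat (ptimes P Q)"
    using assms(1) by (simp add: pmat_mult smult_smult_mat)
  finally have "(\<Sum>i<2^?n. (c \<cdot>\<^sub>m 1\<^sub>m (2^?n)) $$ (i,i))
      = (\<Sum>i<2^?n. ((d * pphase P Q) \<cdot>\<^sub>m pmat (ptimes P Q)) $$ (i,i))"
    by simp
  also have "\<dots> = (d * pphase P Q) * (\<Sum>i<2 ^ length (ptimes P Q). pmat (ptimes P Q) $$ (i,i))"
    using assms(1) by (simp add: sum_distrib_left)
  also have "\<dots> = 0"
    using \<open>\<not> set (ptimes P Q) \<subseteq> {PI}\<close> by (simp only: pmat_trace) simp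
  finally show False using assms(3) by simp
qed

lemma pphase_IZ:
  "length P = length Q \<Longrightarrow> set P \<subseteq> {PI, PZ} \<Longrightarrow> set Q \<subseteq> {PI, PZ} \<Longrightarrow> pphase P Q = 1"
proof (induction P Q rule: list_induct2)
  case (Cons a P b Q) then show ?case by (cases a; cases b) auto
qed simp

lemma psign_all_PI: "length P = length Q \<Longrightarrow> set Q \<subseteq> {PI} \<Longrightarrow> psign P Q = 1"
  by (induction P Q rule: list_induct2) (auto simp: pauli_sign_def)

lemma psign_single:
  assumes "length P = length Q" "t < length P" "\<And>i. i < length P \<Longrightarrow> i \<noteq> t \<Longrightarrow> Q ! i = PI"
  shows "psign P Q = pauli_sign (P ! t) (Q ! t)"
  using assms
proof (induction P Q arbitrary: t rule: list_induct2)
  case (Cons a P b Q)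
  show ?case
  proof (cases t)
    case 0
    have "Q ! i = PI" if "i < length Q" for i
      using Cons.prems(2)[of "Suc i"] that 0 Cons.hyps by simp
    then have "set Q \<subseteq> {PI}" by (auto simp: set_conv_nth)
    then have "psign P Q = 1" using psign_all_PI[OF Cons.hyps] by simp
    then show ?thesis using 0 by simp
  next
    case (Suc t')
    have "Q ! i = PI" if "i < length P" "i \<noteq> t'" for i
      using Cons.prems(2)[of "Suc i"] that Suc by simp
    then have "psign P Q = pauli_sign (P ! t') (Q ! t')"
      using Cons.IH Cons.prems(1) Suc by simp
    moreover have "b = PI" using Cons.prems(2)[of 0] Suc by simp
    ultimately show ?thesis using Suc by (simp add: pauli_sign_def)
  qed
qed simp

lemma pmat_IZ_col0:
  "set Q \<subseteq> {PI, PZ} \<Longrightarrow> r < 2 ^ length Q \<Longrightarrow> pmat Q $$ (r,0) = (if r = 0 then 1 else 0)"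
proof (induction Q arbitrary: r)
  case (Cons a Q)
  let ?d = "2 ^ length Q :: nat"
  have r: "r div ?d < 2" "r mod ?d < ?d"
    using Cons.prems div_mod_less_of_less_mult[of r 2 ?d] by auto
  have "pmat (a # Q) $$ (r,0) = pauli_mat a $$ (r div ?d, 0) * pmat Q $$ (r mod ?d, 0)"
    using Cons.prems by simp
  also have "\<dots> = (if r div ?d = 0 then 1 else 0) * (if r mod ?d = 0 then 1 else 0)"
    using Cons r by (auto simp: less_2_cases index_pauli_mat)
  also have "\<dots> = (if r = 0 then 1 else 0)"
    using nat_eq_iff_div_mod_eq[of r 0 ?d] by auto
  finally show ?case .
qed simp

lemma pmat_col0_norm: "(\<Sum>l<2 ^ length Q. pmat Q $$ (l,0) * cnj (pmat Q $$ (l,0))) = 1"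
proof -
  have "(adj (pmat Q) * pmat Q) $$ (0,0) = 1"
    by (simp add: adj_pmat pmat_square)
  moreover have "(adj (pmat Q) * pmat Q) $$ (0,0) = (\<Sum>l<2 ^ length Q. adj (pmat Q) $$ (0,l) * pmat Q $$ (l,0))"
    by (rule index_mult_mat_sum) auto
  ultimately show ?thesis by (simp add: mult.commute)
qed

lemma pmat_append_block_trace:
  fixes P Q :: "pauli list"
  defines "b \<equiv> 2 ^ length Q"
  shows "(\<Sum>l<b. (\<Sum>i<2 ^ length P. pmat (P @ Q) $$ (i*b + l, i*b))
                 * cnj (\<Sum>j<2 ^ length P. pmat (P @ Q) $$ (j*b + l, j*b)))
       = (if set P \<subseteq> {PI} then of_nat (2 ^ length P) * of_nat (2 ^ length P) else 0)"
proof -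
  define tr where "tr = (\<Sum>i<2 ^ length P. pmat P $$ (i,i))"
  have tr: "tr = (if set P \<subseteq> {PI} then of_nat (2 ^ length P) else 0)"
    using pmat_trace[of P] by (simp add: tr_def)
  have entry: "pmat (P @ Q) $$ (i*b + l, i*b) = pmat P $$ (i,i) * pmat Q $$ (l,0)"
    if "i < 2 ^ length P" "l < b" for i l
  proof -
    have "b > 0" using that(2) by simp
    then have "i*b + l < 2 ^ length P * b" "i*b < 2 ^ length P * b" "(i*b + l) div b = i" "(i*b + l) mod b = l"
      using mult_add_div_mod[OF that] mult_add_div_mod[OF that(1), of 0 b] by auto
    then show ?thesis unfolding pmat_append b_def by simp
  qed
  have col: "(\<Sum>i<2 ^ length P. pmat (P @ Q) $$ (i*b + l, i*b)) = tr * pmat Q $$ (l,0)" if "l < b" for l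
    using that by (simp add: entry tr_def sum_distrib_right)
  have "(\<Sum>l<b. (\<Sum>i<2 ^ length P. pmat (P @ Q) $$ (i*b + l, i*b))
                 * cnj (\<Sum>j<2 ^ length P. pmat (P @ Q) $$ (j*b + l, j*b)))
      = (\<Sum>l<b. (tr * cnj tr) * (pmat Q $$ (l,0) * cnj (pmat Q $$ (l,0))))"
    by (intro sum.cong refl) (simp add: col mult_ac)
  also have "\<dots> = tr * cnj tr"
    using pmat_col0_norm[of Q] by (simp add: b_def sum_distrib_left[symmetric])
  finally show ?thesis by (simp add: tr)
qed

lemma paulis_Suc: "paulis (Suc n) = (\<lambda>(a,E). a # E) ` (UNIV \<times> paulis n)"
proof
  show "paulis (Suc n) \<subseteq> (\<lambda>(a,E). a # E) ` (UNIV \<times> paulis n)"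
  proof
    fix P assume "P \<in> paulis (Suc n)"
    then obtain a E where "P = a # E" "length E = n" by (cases P) (auto simp: paulis_def)
    then show "P \<in> (\<lambda>(a,E). a # E) ` (UNIV \<times> paulis n)" by (auto simp: paulis_def)
  qed
qed (auto simp: paulis_def)

lemma finite_paulis [simp]: "finite (paulis n)"
  by (induction n) (auto simp: paulis_Suc, simp add: paulis_def)

section \<open>Channels in Kraus form\<close>

lemma msum_carrier [simp]: "msum d f S \<in> carrier_mat d d"
  by (simp add: msum_def)

lemma msum_dims [simp]: "dim_row (msum d f S) = d" "dim_col (msum d f S) = d"
  by (simp_all add: msum_def)

lemma index_msum [simp]: "i < d \<Longrightarrow> j < d \<Longrightarrow> msum d f S $$ (i,j) = (\<Sum>x\<in>S. f x $$ (i,j))"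
  by (simp add: msum_def)

lemma msum_cong: "(\<And>x. x \<in> S \<Longrightarrow> f x = g x) \<Longrightarrow> msum d f S = msum d g S"
  by (simp add: msum_def)

lemma msum_reindex: "inj_on h S \<Longrightarrow> msum d f (h ` S) = msum d (f \<circ> h) S"
  by (simp add: msum_def sum.reindex)

lemma ebasis_carrier [simp]: "ebasis d i j \<in> carrier_mat d d"
  by (simp add: ebasis_def)

lemma ebasis_dims [simp]: "dim_row (ebasis d i j) = d" "dim_col (ebasis d i j) = d"
  by (simp_all add: ebasis_def)

lemma index_ebasis [simp]: "r < d \<Longrightarrow> c < d \<Longrightarrow> ebasis d i j $$ (r,c) = (if r = i \<and> c = j then 1 else 0)"
  by (simp add: ebasis_def)

lemma index_sandwich_ebasis:
  assumes "A \<in> carrier_mat n d" "A' \<in> carrier_mat d m" "i < d" "j < d" "x < n" "y < m"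
  shows "(c \<cdot>\<^sub>m (A * ebasis d i j * A')) $$ (x,y) = c * (A $$ (x,i) * A' $$ (j,y))"
proof -
  have "(A * ebasis d i j * A') $$ (x,y) = (\<Sum>u<d. \<Sum>v<d. A $$ (x,u) * ebasis d i j $$ (u,v) * A' $$ (v,y))"
    by (rule index_mult_mat_triple) (use assms in auto)
  also have "\<dots> = (\<Sum>u<d. \<Sum>v<d. if u = i \<and> v = j then A $$ (x,i) * A' $$ (j,y) else 0)"
    by (intro sum.cong refl) auto
  also have "\<dots> = (\<Sum>u<d. if u = i then A $$ (x,i) * A' $$ (j,y) else 0)"
    using assms by (intro sum.cong refl) auto
  also have "\<dots> = A $$ (x,i) * A' $$ (j,y)"
    using assms by simp
  finally show ?thesis using assms by (simp del: index_mult_mat(1))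
qed

lemma index_superop_tensor:
  assumes "r < a*b" "s < a*b"
    and "\<And>i j. i < a \<Longrightarrow> j < a \<Longrightarrow> Phi (ebasis a i j) \<in> carrier_mat a a"
    and "\<And>k l. k < b \<Longrightarrow> l < b \<Longrightarrow> Psi (ebasis b k l) \<in> carrier_mat b b"
  shows "superop_tensor a b Phi Psi M $$ (r,s) = (\<Sum>i<a. \<Sum>k<b. \<Sum>j<a. \<Sum>l<b. M $$ (i*b+k, j*b+l)
      * (Phi (ebasis a i j) $$ (r div b, s div b) * Psi (ebasis b k l) $$ (r mod b, s mod b)))"
proof -
  have "superop_tensor a b Phi Psi M $$ (r,s) = (\<Sum>i<a. \<Sum>j<a. \<Sum>k<b. \<Sum>l<b. M $$ (i*b+k, j*b+l)
      * (Phi (ebasis a i j) $$ (r div b, s div b) * Psi (ebasis b k l) $$ (r mod b, s mod b)))"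
  proof -
    have "dim_row (Phi (ebasis a i j)) = a" "dim_col (Phi (ebasis a i j)) = a" if "i < a" "j < a" for i j
      using assms(3)[OF that] by auto
    moreover have "dim_row (Psi (ebasis b k l)) = b" "dim_col (Psi (ebasis b k l)) = b" if "k < b" "l < b" for k l
      using assms(4)[OF that] by auto
    ultimately show ?thesis
      unfolding superop_tensor_def using assms(1,2) by (simp add: sum_cartesian)
  qed

  then show ?thesis
    by (simp only: sum.swap[where A = "{..<a}" and B = "{..<b}"])
qed

lemma sum_swap_outermost:
  "(\<Sum>i\<in>A. \<Sum>k\<in>B. \<Sum>j\<in>C. \<Sum>l\<in>D. \<Sum>p\<in>P. f p i k j l)
 = (\<Sum>p\<in>P. \<Sum>i\<in>A. \<Sum>k\<in>B. \<Sum>j\<in>C. \<Sum>l\<in>D. f p i k j l)"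
  by (simp add: sum.swap[where B = P])

lemma superop_tensor_kraus:
  fixes c d :: "_ \<Rightarrow> complex"
  assumes "finite I" "finite J" and M: "M \<in> carrier_mat (a*b) (a*b)"
    and A: "\<And>\<alpha>. \<alpha> \<in> I \<Longrightarrow> A \<alpha> \<in> carrier_mat a a \<and> A' \<alpha> \<in> carrier_mat a a"
    and B: "\<And>\<beta>. \<beta> \<in> J \<Longrightarrow> B \<beta> \<in> carrier_mat b b \<and> B' \<beta> \<in> carrier_mat b b"
    and Phi: "\<And>X. X \<in> carrier_mat a a \<Longrightarrow> Phi X = msum a (\<lambda>\<alpha>. c \<alpha> \<cdot>\<^sub>m (A \<alpha> * X * A' \<alpha>)) I"
    and Psi: "\<And>X. X \<in> carrier_mat b b \<Longrightarrow> Psi X = msum b (\<lambda>\<beta>. d \<beta> \<cdot>\<^sub>m (B \<beta> * X * B' \<beta>)) J"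
  shows "superop_tensor a b Phi Psi M
       = msum (a*b) (\<lambda>(\<alpha>,\<beta>). (c \<alpha> * d \<beta>) \<cdot>\<^sub>m (kron (A \<alpha>) (B \<beta>) * M * kron (A' \<alpha>) (B' \<beta>))) (I \<times> J)"
    (is "_ = msum (a*b) ?K (I \<times> J)")
proof (rule eq_matI)
  fix r s assume "r < dim_row (msum (a*b) ?K (I \<times> J))" "s < dim_col (msum (a*b) ?K (I \<times> J))"
  then have rs: "r < a*b" "s < a*b" by auto
  define R r' S s' where "R = r div b" "r' = r mod b" "S = s div b" "s' = s mod b"
  have bounds: "R < a" "r' < b" "S < a" "s' < b"
    using rs div_mod_less_of_less_mult unfolding R_r'_S_s'_def by auto
  have PhiE: "Phi (ebasis a i j) $$ (R,S) = (\<Sum>\<alpha>\<in>I. c \<alpha> * (A \<alpha> $$ (R,i) * A' \<alpha> $$ (j,S)))"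
    if "i < a" "j < a" for i j
    using that bounds A by (simp add: Phi index_sandwich_ebasis[of _ a a _ a])
  have PsiE: "Psi (ebasis b k l) $$ (r',s') = (\<Sum>\<beta>\<in>J. d \<beta> * (B \<beta> $$ (r',k) * B' \<beta> $$ (l,s')))"
    if "k < b" "l < b" for k l
    using that bounds B by (simp add: Psi index_sandwich_ebasis[of _ b b _ b])
  let ?X = "\<lambda>p i k j l. c (fst p) * d (snd p) * (A (fst p) $$ (R,i) * B (snd p) $$ (r',k)
     * M $$ (i*b+k, j*b+l) * (A' (fst p) $$ (j,S) * B' (snd p) $$ (l,s')))"
  have "superop_tensor a b Phi Psi M $$ (r,s) = (\<Sum>i<a. \<Sum>k<b. \<Sum>j<a. \<Sum>l<b.
      M $$ (i*b+k, j*b+l) * (Phi (ebasis a i j) $$ (R,S) * Psi (ebasis b k l) $$ (r',s')))"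
    unfolding R_r'_S_s'_def by (rule index_superop_tensor[OF rs]) (simp_all add: Phi Psi)
  also have "\<dots> = (\<Sum>i<a. \<Sum>k<b. \<Sum>j<a. \<Sum>l<b. \<Sum>p\<in>I \<times> J. ?X p i k j l)"
    by (intro sum.cong refl)
      (simp add: PhiE PsiE sum_product sum_cartesian sum_distrib_left mult_ac, rule sum.swap)
  also have "\<dots> = (\<Sum>p\<in>I \<times> J. \<Sum>i<a. \<Sum>k<b. \<Sum>j<a. \<Sum>l<b. ?X p i k j l)"
    by (rule sum_swap_outermost)
  also have "\<dots> = (\<Sum>p\<in>I \<times> J. ?K p $$ (r,s))"
  proof (intro sum.cong refl)
    fix p assume "p \<in> I \<times> J"
    then obtain \<alpha> \<beta> where p: "p = (\<alpha>,\<beta>)" "\<alpha> \<in> I" "\<beta> \<in> J" by auto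
    then have "A \<alpha> \<in> carrier_mat a a" "A' \<alpha> \<in> carrier_mat a a" "B \<beta> \<in> carrier_mat b b" "B' \<beta> \<in> carrier_mat b b"
      using A B by auto
    note AB = this
    have "kron (A \<alpha>) (B \<beta>) \<in> carrier_mat (a*b) (a*b)" "kron (A' \<alpha>) (B' \<beta>) \<in> carrier_mat (a*b) (a*b)"
      by (rule carrier_matI, use AB in auto)+
    then have K: "kron (A \<alpha>) (B \<beta>) * M * kron (A' \<alpha>) (B' \<beta>) \<in> carrier_mat (a*b) (a*b)"
      using M by (metis mult_carrier_mat)
    have "?K (\<alpha>,\<beta>) $$ (r,s) = (c \<alpha> * d \<beta>) * (kron (A \<alpha>) (B \<beta>) * M * kron (A' \<alpha>) (B' \<beta>)) $$ (r,s)"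
      using rs carrier_matD[OF K] by (simp del: index_mult_mat)
    also have "\<dots> = (\<Sum>i<a. \<Sum>k<b. \<Sum>j<a. \<Sum>l<b. ?X (\<alpha>,\<beta>) i k j l)"
      by (simp only: index_kron_sandwich[OF AB M rs]) (simp add: sum_distrib_left R_r'_S_s'_def)
    finally show "(\<Sum>i<a. \<Sum>k<b. \<Sum>j<a. \<Sum>l<b. ?X p i k j l) = ?K p $$ (r,s)"
      unfolding p by (rule sym)
  qed
  also have "\<dots> = msum (a*b) ?K (I \<times> J) $$ (r,s)"
    using rs by simp
  finally show "superop_tensor a b Phi Psi M $$ (r,s) = msum (a*b) ?K (I \<times> J) $$ (r,s)" .
qed (auto simp: superop_tensor_def)

definition pauli_prob :: "real \<Rightarrow> pauli \<Rightarrow> real" where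
  "pauli_prob p a = (if a = PI then 1 - 3/4 * p else p/4)"

lemma perr_simps: "perr p [] = 1" "perr p (a # E) = pauli_prob p a * perr p E"
  by (simp_all add: perr_def pauli_prob_def)

lemma depol1_kraus:
  assumes "X \<in> carrier_mat 2 2"
  shows "depol1 p X = msum 2 (\<lambda>a. complex_of_real (pauli_prob p a) \<cdot>\<^sub>m (pauli_mat a * X * pauli_mat a)) UNIV"
proof (rule eq_matI)
  fix i j assume "i < dim_row (msum 2 (\<lambda>a. complex_of_real (pauli_prob p a) \<cdot>\<^sub>m (pauli_mat a * X * pauli_mat a)) UNIV)"
    "j < dim_col (msum 2 (\<lambda>a. complex_of_real (pauli_prob p a) \<cdot>\<^sub>m (pauli_mat a * X * pauli_mat a)) UNIV)"
  then have "i < 2" "j < 2" by auto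
  moreover have "pauli_mat PI * X * pauli_mat PI = X" using assms by (simp add: pauli_mat_PI)
  moreover have "dim_row (pauli_mat a * X * pauli_mat a) = 2" "dim_col (pauli_mat a * X * pauli_mat a) = 2" for a
    using assms by auto
  ultimately show "depol1 p X $$ (i,j)
      = msum 2 (\<lambda>a. complex_of_real (pauli_prob p a) \<cdot>\<^sub>m (pauli_mat a * X * pauli_mat a)) UNIV $$ (i,j)"
    using assms unfolding depol1_def
    by (simp add: UNIV_pauli pauli_prob_def distrib_left del: index_mult_mat)
qed (use assms in \<open>auto simp: depol1_def\<close>)

lemma depol_kraus:
  "M \<in> carrier_mat (2^n) (2^n) \<Longrightarrow>
   depol n p M = msum (2^n) (\<lambda>E. complex_of_real (perr p E) \<cdot>\<^sub>m (pmat E * M * pmat E)) (paulis n)"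
proof (induction n arbitrary: M)
  case 0
  have "paulis 0 = {[]}" by (auto simp: paulis_def)
  then show ?case by (intro eq_matI) (use 0 in \<open>auto simp: perr_simps\<close>)
next
  case (Suc n)
  have inj: "inj_on (\<lambda>(a,E). a # E) (UNIV \<times> paulis n)" by (auto simp: inj_on_def)
  have "depol (Suc n) p M = msum (2 * 2^n) (\<lambda>(a,E). (complex_of_real (pauli_prob p a) * complex_of_real (perr p E))
      \<cdot>\<^sub>m (kron (pauli_mat a) (pmat E) * M * kron (pauli_mat a) (pmat E))) (UNIV \<times> paulis n)"
    using Suc.prems
    by (simp, intro superop_tensor_kraus) (auto simp: depol1_kraus Suc.IH)
  also have "\<dots> = msum (2^Suc n) (\<lambda>E. complex_of_real (perr p E) \<cdot>\<^sub>m (pmat E * M * pmat E)) (paulis (Suc n))"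
    unfolding paulis_Suc msum_reindex[OF inj] by (simp add: comp_def, rule msum_cong) (auto simp: perr_simps)
  finally show ?case .
qed

lemma max_ent_index:
  "i < m \<Longrightarrow> k < m \<Longrightarrow> max_ent m (i*m + k) = (if i = k then complex_of_real (1 / sqrt (real m)) else 0)"
  by (simp add: max_ent_def mult_add_div_mod)

lemma chan_fid_diag:
  assumes "\<And>i j. i < m \<Longrightarrow> j < m \<Longrightarrow> Ef (ebasis m i j) \<in> carrier_mat m m"
  shows "chan_fid m Ef = (\<Sum>i<m. \<Sum>j<m. Ef (ebasis m i j) $$ (i,j)) / (of_nat m * of_nat m)"
proof -
  define \<rho> where "\<rho> = mat (m*m) (m*m) (\<lambda>(x,y). max_ent m x * cnj (max_ent m y))"
  define \<sigma> where "\<sigma> = superop_tensor m m (\<lambda>M. M) Ef \<rho>"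
  define q where "q = complex_of_real (1 / sqrt (real m))"
  have sqrt: "complex_of_real (sqrt (real m)) * complex_of_real (sqrt (real m)) = of_nat m"
    by (simp only: of_real_mult[symmetric] real_sqrt_mult_self) simp
  have qq: "q * q = 1 / of_nat m" "cnj q = q"
    using sqrt by (simp_all add: q_def)
  have \<rho>: "\<rho> $$ (i*m+k, j*m+l) = (if i = k \<and> j = l then 1 / of_nat m else 0)"
    if "i < m" "k < m" "j < m" "l < m" for i j k l
    using that sqrt by (simp add: \<rho>_def max_ent_index mult_add_div_mod)
  have \<sigma>: "\<sigma> $$ (a*m+a, b*m+b) = Ef (ebasis m a b) $$ (a,b) / of_nat m" if "a < m" "b < m" for a b
  proof -
    have "\<sigma> $$ (a*m+a, b*m+b) = (\<Sum>i<m. \<Sum>k<m. \<Sum>j<m. \<Sum>l<m.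
        \<rho> $$ (i*m+k, j*m+l) * (ebasis m i j $$ (a,b) * Ef (ebasis m k l) $$ (a,b)))"
      unfolding \<sigma>_def using that assms
      by (subst index_superop_tensor) (auto simp: mult_add_div_mod)
    also have "\<dots> = (\<Sum>i<m. \<Sum>k<m. \<Sum>j<m. \<Sum>l<m.
        if l = b then if j = b then if k = a then if i = a then Ef (ebasis m a b) $$ (a,b) / of_nat m
        else 0 else 0 else 0 else 0)"
      using that by (intro sum.cong refl) (auto simp: \<rho>)
    finally show ?thesis using that by simp
  qed
  have "chan_fid m Ef = (\<Sum>a<m. \<Sum>a'<m. \<Sum>b<m. \<Sum>b'<m.
      cnj (max_ent m (a*m+a')) * \<sigma> $$ (a*m+a', b*m+b') * max_ent m (b*m+b'))"
    unfolding chan_fid_def Let_def \<rho>_def[symmetric] \<sigma>_def[symmetric] by (simp only: sum_lessThan_mult)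
  also have "\<dots> = (\<Sum>a<m. \<Sum>b<m. \<Sum>a'<m. \<Sum>b'<m.
      cnj (max_ent m (a*m+a')) * \<sigma> $$ (a*m+a', b*m+b') * max_ent m (b*m+b'))"
    by (rule sum.cong[OF refl], rule sum.swap)
  also have "\<dots> = (\<Sum>a<m. \<Sum>b<m. \<Sum>a'<m. \<Sum>b'<m.
      if b' = b then if a' = a then \<sigma> $$ (a*m+a, b*m+b) / of_nat m else 0 else 0)"
    using sqrt by (intro sum.cong refl) (auto simp: max_ent_index)
  also have "\<dots> = (\<Sum>a<m. \<Sum>b<m. \<sigma> $$ (a*m+a, b*m+b) / of_nat m)"
    by simp
  also have "\<dots> = (\<Sum>a<m. \<Sum>b<m. Ef (ebasis m a b) $$ (a,b) / (of_nat m * of_nat m))"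
    by (intro sum.cong refl) (simp add: \<sigma>)
  finally show ?thesis by (simp add: sum_divide_distrib)
qed

lemma msum_sandwich:
  assumes L: "L \<in> carrier_mat d d" and R: "R \<in> carrier_mat d d" and f: "\<And>x. x \<in> S \<Longrightarrow> f x \<in> carrier_mat d d"
  shows "L * msum d f S * R = msum d (\<lambda>x. L * f x * R) S"
proof (rule eq_matI)
  fix i j assume "i < dim_row (msum d (\<lambda>x. L * f x * R) S)" "j < dim_col (msum d (\<lambda>x. L * f x * R) S)"
  then have ij: "i < d" "j < d" by auto
  have "(L * msum d f S * R) $$ (i,j) = (\<Sum>u<d. \<Sum>v<d. L $$ (i,u) * msum d f S $$ (u,v) * R $$ (v,j))"
    by (rule index_mult_mat_triple[OF L msum_carrier R ij])
  also have "\<dots> = (\<Sum>u<d. \<Sum>v<d. \<Sum>x\<in>S. L $$ (i,u) * f x $$ (u,v) * R $$ (v,j))"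
    by (intro sum.cong refl) (simp add: sum_distrib_left sum_distrib_right)
  also have "\<dots> = (\<Sum>x\<in>S. \<Sum>u<d. \<Sum>v<d. L $$ (i,u) * f x $$ (u,v) * R $$ (v,j))"
    by (simp only: sum.swap[where B = S])
  also have "\<dots> = (\<Sum>x\<in>S. (L * f x * R) $$ (i,j))"
  proof (intro sum.cong refl)
    fix x assume "x \<in> S"
    show "(\<Sum>u<d. \<Sum>v<d. L $$ (i,u) * f x $$ (u,v) * R $$ (v,j)) = (L * f x * R) $$ (i,j)"
      by (rule index_mult_mat_triple[symmetric, OF L f[OF \<open>x \<in> S\<close>] R ij])
  qed
  finally show "(L * msum d f S * R) $$ (i,j) = msum d (\<lambda>x. L * f x * R) S $$ (i,j)"
    using ij by simp
qed (use assms in auto)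

lemma zero_proj_eq_ebasis: "zero_proj t = ebasis (2^t) 0 0"
proof (induction t)
  case 0 then show ?case by (rule eq_matI) auto
next
  case (Suc t) then show ?case using kron_ebasis[of 0 2 0 0 "2^t"] by simp
qed

section \<open>Unitary and Clifford conjugation\<close>

lemma unitary_conj_cancel:
  assumes "unitary_mat d U" "X \<in> carrier_mat d d"
  shows "adj U * (U * X * adj U) * U = X" "U * (adj U * X * U) * adj U = X"
proof -
  have U: "U \<in> carrier_mat d d" "adj U \<in> carrier_mat d d" and UU: "adj U * U = 1\<^sub>m d" "U * adj U = 1\<^sub>m d"
    using assms(1) by (auto simp: unitary_mat_def)
  have "adj U * (U * X * adj U) * U = (adj U * U) * X * (adj U * U)"
    using U assms(2) by (simp add: assoc_mult_mat[of _ d d _ d _ d])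
  then show "adj U * (U * X * adj U) * U = X" using assms(2) UU by simp
  have "U * (adj U * X * U) * adj U = (U * adj U) * X * (U * adj U)"
    using U assms(2) by (simp add: assoc_mult_mat[of _ d d _ d _ d])
  then show "U * (adj U * X * U) * adj U = X" using assms(2) UU by simp
qed

lemma unitary_conj_mult:
  assumes "unitary_mat d U" "X \<in> carrier_mat d d" "Y \<in> carrier_mat d d"
  shows "(U * X * adj U) * (U * Y * adj U) = U * (X * Y) * adj U"
proof -
  have U: "U \<in> carrier_mat d d" "adj U \<in> carrier_mat d d" and UU: "adj U * U = 1\<^sub>m d"
    using assms(1) by (auto simp: unitary_mat_def)
  have "(U * X * adj U) * (U * Y * adj U) = U * X * (adj U * U) * Y * adj U"
    using U assms(2,3) by (simp add: assoc_mult_mat[of _ d d _ d _ d])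
  then show ?thesis using U assms(2,3) UU by (simp add: assoc_mult_mat[of _ d d _ d _ d])
qed

lemma unitary_conj_commute_iff:
  assumes "unitary_mat d U" "X \<in> carrier_mat d d" "Z \<in> carrier_mat d d"
  shows "X * (U * Z * adj U) = (U * Z * adj U) * X \<longleftrightarrow>
         (adj U * X * U) * Z = Z * (adj U * X * U)"
proof -
  have U: "U \<in> carrier_mat d d" "adj U \<in> carrier_mat d d"
    using assms(1) by (auto simp: unitary_mat_def)
  let ?X = "adj U * X * U"
  have X: "U * ?X * adj U = X" by (rule unitary_conj_cancel(2)[OF assms(1,2)])
  have l: "X * (U * Z * adj U) = U * (?X * Z) * adj U"
  proof -
    have "X * (U * Z * adj U) = (U * ?X * adj U) * (U * Z * adj U)" by (simp only: X)
    also have "\<dots> = U * (?X * Z) * adj U"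
      by (rule unitary_conj_mult[OF assms(1)]) (use assms U in auto)
    finally show ?thesis .
  qed
  have r: "(U * Z * adj U) * X = U * (Z * ?X) * adj U"
  proof -
    have "(U * Z * adj U) * X = (U * Z * adj U) * (U * ?X * adj U)" by (simp only: X)
    also have "\<dots> = U * (Z * ?X) * adj U"
      by (rule unitary_conj_mult[OF assms(1)]) (use assms U in auto)
    finally show ?thesis .
  qed
  have cancel: "U * A * adj U = U * B * adj U \<longleftrightarrow> A = B"
    if "A \<in> carrier_mat d d" "B \<in> carrier_mat d d" for A B
    using unitary_conj_cancel(1)[OF assms(1) that(1)] unitary_conj_cancel(1)[OF assms(1) that(2)] by metis
  show ?thesis
    unfolding l r by (rule cancel) (use assms U in auto)
qed

lemma clifford_adj_conj_pauli:
  assumes "clifford n U" "Q \<in> paulis n"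
  shows "\<exists>P\<in>paulis n. \<exists>c. cmod c = 1 \<and> adj U * pmat Q * U = c \<cdot>\<^sub>m pmat P"
proof -
  have U: "unitary_mat (2^n) U" "U \<in> carrier_mat (2^n) (2^n)" "adj U \<in> carrier_mat (2^n) (2^n)"
    using assms(1) by (auto simp: clifford_def unitary_mat_def)
  define f where "f P = (SOME Q. Q \<in> paulis n \<and> (\<exists>c. cmod c = 1 \<and> U * pmat P * adj U = c \<cdot>\<^sub>m pmat Q))" for P
  have f: "f P \<in> paulis n \<and> (\<exists>c. cmod c = 1 \<and> U * pmat P * adj U = c \<cdot>\<^sub>m pmat (f P))" if "P \<in> paulis n" for P
  proof -
    have "\<exists>Q. Q \<in> paulis n \<and> (\<exists>c. cmod c = 1 \<and> U * pmat P * adj U = c \<cdot>\<^sub>m pmat Q)"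
      using assms(1) that unfolding clifford_def by blast
    then show ?thesis unfolding f_def by (rule someI_ex)
  qed
  have conj_back: "pmat P = c \<cdot>\<^sub>m (adj U * pmat R * U)"
    if "P \<in> paulis n" "R \<in> paulis n" "U * pmat P * adj U = c \<cdot>\<^sub>m pmat R" for P R c
    using unitary_conj_cancel(1)[OF U(1), of "pmat P"] that U by (simp add: smult_sandwich)
  have "inj_on f (paulis n)"
    \<comment> \<open>so conjugation by U permutes the finitely many Pauli strings and every Q is hit\<close>
  proof (rule inj_onI)
    fix P P' assume P: "P \<in> paulis n" and P': "P' \<in> paulis n" and eq: "f P = f P'"
    obtain c c' where "cmod c = 1" "U * pmat P * adj U = c \<cdot>\<^sub>m pmat (f P)"
      and c': "cmod c' = 1" "U * pmat P' * adj U = c' \<cdot>\<^sub>m pmat (f P)"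
      using f[OF P] f[OF P'] eq by metis
    then have "pmat P = c \<cdot>\<^sub>m (adj U * pmat (f P) * U)" "pmat P' = c' \<cdot>\<^sub>m (adj U * pmat (f P) * U)"
      using conj_back P P' f[OF P] by blast+
    then have "c' \<cdot>\<^sub>m pmat P = c \<cdot>\<^sub>m pmat P'" by (simp add: smult_smult_mat mult.commute)
    moreover have "c' \<noteq> 0" using c' by auto
    ultimately show "P = P'" using pmat_smult_inj[of P P' c' c] P P' by (simp add: paulis_def)
  qed
  then have "f ` paulis n = paulis n"
    by (intro endo_inj_surj) (use f in auto)
  then obtain P where P: "P \<in> paulis n" "f P = Q"
    using assms(2) by (metis imageE)
  then obtain c where c: "cmod c = 1" "U * pmat P * adj U = c \<cdot>\<^sub>m pmat Q"
    using f[OF P(1)] by blast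
  then have "adj U * pmat Q * U = (1/c) \<cdot>\<^sub>m pmat P"
    using conj_back[OF P(1) assms(2) c(2)] by (auto simp: smult_smult_mat)
  then show ?thesis
    using P c by (intro bexI[of _ P] exI[of _ "1/c"] conjI) (simp_all add: norm_divide)
qed

section \<open>Z strings on the ancilla qubits\<close>

text \<open>Qubits are numbered from 1, as in Z_at: ancilla_zstring n k J is Z exactly on the qubits k + j, j \<in> J.\<close>

definition zstring :: "nat \<Rightarrow> nat set \<Rightarrow> pauli list" where
  "zstring m J = map (\<lambda>t. if t + 1 \<in> J then PZ else PI) [0..<m]"

definition ancilla_zstring :: "nat \<Rightarrow> nat \<Rightarrow> nat set \<Rightarrow> pauli list" where
  "ancilla_zstring n k J = replicate k PI @ zstring (n - k) J"

lemma length_zstring [simp]: "length (zstring m J) = m"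
  by (simp add: zstring_def)

lemma set_zstring: "set (zstring m J) \<subseteq> {PI, PZ}"
  by (auto simp: zstring_def)

lemma length_ancilla_zstring [simp]: "k \<le> n \<Longrightarrow> length (ancilla_zstring n k J) = n"
  by (simp add: ancilla_zstring_def)

lemma pmat_ancilla_zstring: "pmat (ancilla_zstring n k J) = kron (1\<^sub>m (2^k)) (pmat (zstring (n - k) J))"
  by (simp add: ancilla_zstring_def pmat_append pmat_replicate_PI)

lemma pmat_zstring_mult: "pmat (zstring m J) * pmat (zstring m J') = pmat (zstring m ((J - J') \<union> (J' - J)))"
proof -
  have "pphase (zstring m J) (zstring m J') = 1"
    using set_zstring[of m J] set_zstring[of m J'] by (intro pphase_IZ) auto
  moreover have "ptimes (zstring m J) (zstring m J') = zstring m ((J - J') \<union> (J' - J))"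
    by (rule nth_equalityI) (auto simp: ptimes_def zstring_def)
  ultimately show ?thesis by (simp add: pmat_mult)
qed

lemma ancilla_zstring_empty: "k \<le> n \<Longrightarrow> ancilla_zstring n k {} = replicate n PI"
  by (simp add: ancilla_zstring_def zstring_def replicate_add[symmetric] map_replicate_const)

lemma Z_at_eq_ancilla_zstring: "k \<le> n \<Longrightarrow> 1 \<le> j \<Longrightarrow> Z_at n (j + k) = ancilla_zstring n k {j}"
  by (rule nth_equalityI) (auto simp: Z_at_def ancilla_zstring_def zstring_def nth_append)

lemma ancilla_zstring_restrict: "ancilla_zstring n k J = ancilla_zstring n k (J \<inter> {1..n-k})"
  by (auto simp: ancilla_zstring_def zstring_def)

lemma pmat_ancilla_zstring_mult:
  "pmat (ancilla_zstring n k J) * pmat (ancilla_zstring n k J')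
   = pmat (ancilla_zstring n k ((J - J') \<union> (J' - J)))"
  unfolding pmat_ancilla_zstring
  by (subst kron_mult[of _ "2^k" "2^k" _ "2^k" _ "2^(n-k)" "2^(n-k)" _ "2^(n-k)"])
    (auto simp: pmat_zstring_mult)

lemma finite_syndromes [simp]: "finite (syndromes t)"
proof -
  have "syndromes t = {xs. set xs \<subseteq> (UNIV :: bool set) \<and> length xs = t}" by (auto simp: syndromes_def)
  then show ?thesis using finite_lists_length_eq[of "UNIV :: bool set" t] by simp
qed

section \<open>The stabilizer code\<close>

locale stabilizer_code =
  fixes n k :: nat and U :: "complex mat"
  assumes k_le_n: "k \<le> n" and clifford_U: "clifford n U"

begin

abbreviation "N \<equiv> (2::nat) ^ n"

abbreviation "Nlog \<equiv> (2::nat) ^ k"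

abbreviation "Nanc \<equiv> (2::nat) ^ (n - k)"

lemma Nlog_Nanc: "Nlog * Nanc = N"
  using k_le_n by (simp add: power_add[symmetric])

lemma index_lt_N: "i < Nlog \<Longrightarrow> l < Nanc \<Longrightarrow> i * Nanc + l < N"
  using mult_add_div_mod(3)[of i Nlog l Nanc] Nlog_Nanc by simp

lemma unitary_U: "unitary_mat N U"
  using clifford_U by (simp add: clifford_def)

lemma U_carrier [simp]: "U \<in> carrier_mat N N" and adj_U_carrier [simp]: "adj U \<in> carrier_mat N N"
  using unitary_U by (auto simp: unitary_mat_def)

lemma U_dims [simp]: "dim_row U = N" "dim_col U = N"
  using U_carrier by (auto simp del: U_carrier)

lemma adj_U_U: "adj U * U = 1\<^sub>m N"
  using unitary_U by (simp add: unitary_mat_def)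

lemma ancilla_zstring_carrier [simp]: "pmat (ancilla_zstring n k J) \<in> carrier_mat N N"
  using pmat_carrier[of "ancilla_zstring n k J"] k_le_n by simp

lemma gen_eq_conj: "1 \<le> j \<Longrightarrow> gen n k U j = U * pmat (ancilla_zstring n k {j}) * adj U"
  by (simp add: gen_def Z_at_eq_ancilla_zstring k_le_n)

lemma gen_carrier [simp]: "gen n k U j \<in> carrier_mat N N"
  unfolding gen_def using pmat_carrier[of "Z_at n (j+k)"] by (simp add: Z_at_def)

lemma adj_gen: "adj (gen n k U j) = gen n k U j"
  unfolding gen_def using pmat_carrier[of "Z_at n (j+k)"]
  by (simp add: adj_mult[of _ N N _ N] assoc_mult_mat[of _ N N _ N _ N] adj_pmat Z_at_def)

lemma conj_ancilla_zstring_mult: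
  "(U * pmat (ancilla_zstring n k J) * adj U) * (U * pmat (ancilla_zstring n k J') * adj U)
   = U * pmat (ancilla_zstring n k ((J - J') \<union> (J' - J))) * adj U"
  by (simp add: unitary_conj_mult[OF unitary_U] pmat_ancilla_zstring_mult)

lemma conj_ancilla_zstring_empty: "U * pmat (ancilla_zstring n k {}) * adj U = 1\<^sub>m N"
  using k_le_n unitary_U by (simp add: ancilla_zstring_empty pmat_replicate_PI unitary_mat_def)

lemma conj_ancilla_zstring_square:
  "(U * pmat (ancilla_zstring n k J) * adj U) * (U * pmat (ancilla_zstring n k J) * adj U) = 1\<^sub>m N"
  by (simp add: conj_ancilla_zstring_mult conj_ancilla_zstring_empty)

lemma stabilizer_iff: "g \<in> stabilizer n k U \<longleftrightarrow> (\<exists>J. g = U * pmat (ancilla_zstring n k J) * adj U)"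
proof
  assume "g \<in> stabilizer n k U"
  then show "\<exists>J. g = U * pmat (ancilla_zstring n k J) * adj U"
  proof (induction rule: stabilizer.induct)
    case one
    then show ?case using conj_ancilla_zstring_empty by metis
  next
    case (mul M j)
    then show ?case using adj_gen by (metis conj_ancilla_zstring_mult gen_eq_conj atLeastAtMost_iff)
  next
    case (mul_inv M j)
    then show ?case using adj_gen by (metis conj_ancilla_zstring_mult gen_eq_conj atLeastAtMost_iff)
  qed
next
  have "U * pmat (ancilla_zstring n k J) * adj U \<in> stabilizer n k U" if "finite J" "J \<subseteq> {1..n-k}" for J
    using that
  proof (induction J rule: finite_induct)
    case empty
    then show ?case using stabilizer.one by (simp add: conj_ancilla_zstring_empty)
  next
    case (insert j J)
    then have "(U * pmat (ancilla_zstring n k J) * adj U) * gen n k U j \<in> stabilizer n k U"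
      by (intro stabilizer.mul) auto
    moreover have "(J - {j}) \<union> ({j} - J) = insert j J" using insert by auto
    ultimately show ?case using insert by (simp add: gen_eq_conj conj_ancilla_zstring_mult)
  qed
  then show "\<exists>J. g = U * pmat (ancilla_zstring n k J) * adj U \<Longrightarrow> g \<in> stabilizer n k U"
    by (metis ancilla_zstring_restrict finite_atLeastAtMost finite_subset inf_le2)
qed

lemma stabilizer_carrier: "g \<in> stabilizer n k U \<Longrightarrow> g \<in> carrier_mat N N"
  by (auto simp: stabilizer_iff)

lemma stabilizer_square: "g \<in> stabilizer n k U \<Longrightarrow> g * g = 1\<^sub>m N"
  by (auto simp: stabilizer_iff conj_ancilla_zstring_square)

lemma stabilizer_commute_gen: "g \<in> stabilizer n k U \<Longrightarrow> 1 \<le> j \<Longrightarrow> g * gen n k U j = gen n k U j * g"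
  by (auto simp: stabilizer_iff gen_eq_conj conj_ancilla_zstring_mult Un_commute)

lemma syndrome_nth:
  "1 \<le> j \<Longrightarrow> j \<le> n - k \<Longrightarrow>
   syndrome n k U E ! (j - 1) \<longleftrightarrow> \<not> (pmat E * gen n k U j = gen n k U j * pmat E)"
  unfolding syndrome_def by (subst nth_map) (auto simp del: upt_Suc)

lemma length_syndrome [simp]: "length (syndrome n k U E) = n - k"
  by (simp add: syndrome_def del: upt_Suc)

lemma syndrome_in_syndromes: "syndrome n k U E \<in> syndromes (n - k)"
  by (simp add: syndromes_def)

lemma pmat_gen_commute:
  assumes E: "E \<in> paulis n" and j: "1 \<le> j" "j \<le> n - k"
  shows "pmat E * gen n k U j = (if syndrome n k U E ! (j - 1) then -1 else 1) \<cdot>\<^sub>m (gen n k U j * pmat E)"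
proof -
  have "Z_at n (j + k) \<in> paulis n" by (simp add: Z_at_def paulis_def)
  then obtain Q c where Q: "Q \<in> paulis n" "cmod c = 1" "gen n k U j = c \<cdot>\<^sub>m pmat Q"
    using clifford_U unfolding clifford_def gen_def by blast
  have len: "length E = length Q" and PE: "pmat E \<in> carrier_mat N N" and PQ: "pmat Q \<in> carrier_mat N N"
    using Q E by (auto simp: paulis_def)
  have EG: "pmat E * gen n k U j = c \<cdot>\<^sub>m (pmat E * pmat Q)"
    unfolding Q(3) using PE PQ by (simp add: mult_smult_distrib[of _ N N _ N])
  have GE: "gen n k U j * pmat E = c \<cdot>\<^sub>m (pmat Q * pmat E)"
    unfolding Q(3) using PE PQ by (simp add: mult_smult_assoc_mat[of _ N N _ N])
  have sign: "pmat E * gen n k U j = psign E Q \<cdot>\<^sub>m (gen n k U j * pmat E)"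
    unfolding EG GE pmat_commute[OF len] by (simp add: smult_smult_mat mult.commute)
  have "pmat E * gen n k U j = gen n k U j * pmat E \<longleftrightarrow> pmat E * pmat Q = pmat Q * pmat E"
    unfolding EG GE using smult_mat_cancel[of c] Q(2) by force
  then have "syndrome n k U E ! (j - 1) \<longleftrightarrow> psign E Q \<noteq> 1"
    using syndrome_nth[OF j] pmat_commute_iff[OF len] by simp
  then show ?thesis using sign psign_cases[OF len] by auto
qed

text \<open>The isometry |i\<rangle> \<mapsto> |i\<rangle>|0\<dots>0\<rangle>; encoding is conjugation by U * ancilla_embed.\<close>

definition ancilla_embed :: "complex mat" where
  "ancilla_embed = mat N Nlog (\<lambda>(r,i). if r = i * Nanc then 1 else 0)"

lemma ancilla_embed_carrier [simp]: "ancilla_embed \<in> carrier_mat N Nlog"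
  by (simp add: ancilla_embed_def)

lemma ancilla_embed_dims [simp]: "dim_row ancilla_embed = N" "dim_col ancilla_embed = Nlog"
  by (simp_all add: ancilla_embed_def)

lemma code_isometry_carrier [simp]: "U * ancilla_embed \<in> carrier_mat N Nlog"
  by (rule mult_carrier_mat) auto

lemma index_mult_ancilla_embed:
  assumes "A \<in> carrier_mat r N" "x < r" "i < Nlog"
  shows "(A * ancilla_embed) $$ (x,i) = A $$ (x, i * Nanc)"
proof -
  have "(A * ancilla_embed) $$ (x,i) = (\<Sum>u<N. A $$ (x,u) * ancilla_embed $$ (u,i))"
    by (rule index_mult_mat_sum) (use assms in auto)
  also have "\<dots> = (\<Sum>u<N. if u = i * Nanc then A $$ (x, i * Nanc) else 0)"
    using assms by (intro sum.cong refl) (auto simp: ancilla_embed_def)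
  finally show ?thesis using index_lt_N[OF assms(3), of 0] by simp
qed

lemma ancilla_zstring_fixes_embed: "pmat (ancilla_zstring n k J) * ancilla_embed = ancilla_embed"
proof (rule eq_matI)
  fix r i assume "r < dim_row ancilla_embed" "i < dim_col ancilla_embed"
  then have ri: "r < N" "i < Nlog" by (auto simp: ancilla_embed_def)
  then have r: "r div Nanc < Nlog" "r mod Nanc < Nanc"
    using Nlog_Nanc div_mod_less_of_less_mult[of r Nlog Nanc] by auto
  have "(pmat (ancilla_zstring n k J) * ancilla_embed) $$ (r,i) = pmat (ancilla_zstring n k J) $$ (r, i * Nanc)"
    by (rule index_mult_ancilla_embed) (use ri in auto)
  also have "\<dots> = 1\<^sub>m Nlog $$ (r div Nanc, i) * pmat (zstring (n - k) J) $$ (r mod Nanc, 0)"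
    unfolding pmat_ancilla_zstring using ri Nlog_Nanc k_le_n mult_add_div_mod[OF ri(2), of 0 Nanc] by simp
  also have "\<dots> = (if r div Nanc = i \<and> r mod Nanc = 0 then 1 else 0)"
    using r ri set_zstring[of "n - k" J] by (simp add: pmat_IZ_col0)
  also have "\<dots> = ancilla_embed $$ (r,i)"
    using ri nat_eq_iff_div_mod_eq[of r "i * Nanc" Nanc] by (auto simp: ancilla_embed_def)
  finally show "(pmat (ancilla_zstring n k J) * ancilla_embed) $$ (r,i) = ancilla_embed $$ (r,i)" .
qed (auto simp: ancilla_embed_def k_le_n)

lemma gen_fixes_code: "1 \<le> j \<Longrightarrow> gen n k U j * (U * ancilla_embed) = U * ancilla_embed"
proof -
  assume j: "1 \<le> j"
  have "gen n k U j * (U * ancilla_embed) = U * pmat (ancilla_zstring n k {j}) * (adj U * U) * ancilla_embed"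
    by (simp add: gen_eq_conj[OF j] assoc_mult_mat[of _ N N _ N _ Nlog] assoc_mult_mat[of _ N N _ N _ N])
  also have "\<dots> = U * (pmat (ancilla_zstring n k {j}) * ancilla_embed)"
    by (simp add: adj_U_U assoc_mult_mat[of _ N N _ N _ Nlog])
  finally show ?thesis by (simp add: ancilla_zstring_fixes_embed)
qed

definition syndrome_factor :: "bool list \<Rightarrow> nat \<Rightarrow> complex mat" where
  "syndrome_factor s j = (1/2) \<cdot>\<^sub>m (1\<^sub>m N + (if s ! (j - 1) then -1 else 1) \<cdot>\<^sub>m gen n k U j)"

lemma syndrome_factor_carrier [simp]: "syndrome_factor s j \<in> carrier_mat N N"
  by (simp add: syndrome_factor_def)

lemma adj_syndrome_factor: "adj (syndrome_factor s j) = syndrome_factor s j"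
  unfolding syndrome_factor_def by (simp add: adj_smult adj_add[of _ N N] adj_gen)

lemma proj_eq_foldr: "proj n k U s = foldr (\<lambda>j M. syndrome_factor s j * M) [1..<n-k+1] (1\<^sub>m N)"
  by (simp add: proj_def syndrome_factor_def)

lemma proj_carrier [simp]: "proj n k U s \<in> carrier_mat N N"
proof -
  have "foldr (\<lambda>j M. syndrome_factor s j * M) js (1\<^sub>m N) \<in> carrier_mat N N" for js
    by (induction js) auto
  then show ?thesis unfolding proj_eq_foldr .
qed

text \<open>The encoded state E U |i,0\<rangle> is an eigenvector of every generator, with the syndrome bit as sign.\<close>

lemma syndrome_factor_encoded_error:
  assumes E: "E \<in> paulis n" and j: "1 \<le> j" "j \<le> n - k"
  shows "syndrome_factor s j * (pmat E * (U * ancilla_embed))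
       = (if s ! (j - 1) = syndrome n k U E ! (j - 1) then 1 else 0) \<cdot>\<^sub>m (pmat E * (U * ancilla_embed))"
proof -
  let ?g = "gen n k U j" and ?X = "pmat E * (U * ancilla_embed)"
  define \<sigma> :: complex where "\<sigma> = (if s ! (j - 1) then -1 else 1)"
  define \<tau> :: complex where "\<tau> = (if syndrome n k U E ! (j - 1) then -1 else 1)"
  have PE: "pmat E \<in> carrier_mat N N" using E by simp
  have X: "?X \<in> carrier_mat N Nlog" using PE by (rule mult_carrier_mat) simp
  have gE: "?g * pmat E = \<tau> \<cdot>\<^sub>m (pmat E * ?g)"
    using pmat_gen_commute[OF E j] by (auto simp: \<tau>_def smult_smult_mat)
  have "?g * ?X = (?g * pmat E) * (U * ancilla_embed)"
    using PE by (simp add: assoc_mult_mat[of _ N N _ N _ Nlog])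
  also have "\<dots> = \<tau> \<cdot>\<^sub>m (pmat E * (?g * (U * ancilla_embed)))"
    unfolding gE using PE
    by (simp add: mult_smult_assoc_mat[of _ N N _ Nlog] assoc_mult_mat[of _ N N _ N _ Nlog])
  finally have gX: "?g * ?X = \<tau> \<cdot>\<^sub>m ?X"
    using gen_fixes_code[OF j(1)] by simp
  have "syndrome_factor s j * ?X = (1/2) \<cdot>\<^sub>m (?X + \<sigma> \<cdot>\<^sub>m (?g * ?X))"
    unfolding syndrome_factor_def \<sigma>_def[symmetric] using X
    by (simp add: mult_smult_assoc_mat[of _ N N _ Nlog] add_mult_distrib_mat[of _ N N _ _ Nlog]
        mult_smult_assoc_mat[of _ N N _ Nlog] left_mult_one_mat)
  also have "\<dots> = (if s ! (j - 1) = syndrome n k U E ! (j - 1) then 1 else 0) \<cdot>\<^sub>m ?X"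
    unfolding gX by (rule eq_matI) (use X in \<open>auto simp: \<sigma>_def \<tau>_def field_simps\<close>)
  finally show ?thesis .
qed

lemma foldr_syndrome_factors_encoded_error:
  assumes E: "E \<in> paulis n" and js: "set js \<subseteq> {1..n-k}"
  shows "foldr (\<lambda>j M. syndrome_factor s j * M) js (1\<^sub>m N) * (pmat E * (U * ancilla_embed))
    = (if \<forall>j\<in>set js. s ! (j - 1) = syndrome n k U E ! (j - 1) then 1 else 0) \<cdot>\<^sub>m (pmat E * (U * ancilla_embed))"
  using js
proof (induction js)
  case Nil
  have "pmat E * (U * ancilla_embed) \<in> carrier_mat N Nlog" using E by (intro mult_carrier_mat) auto
  then show ?case by (simp add: left_mult_one_mat)
next
  case (Cons j js)
  let ?X = "pmat E * (U * ancilla_embed)" and ?R = "foldr (\<lambda>j M. syndrome_factor s j * M) js (1\<^sub>m N)"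
  have X: "?X \<in> carrier_mat N Nlog" using E by (intro mult_carrier_mat) auto
  have R: "?R \<in> carrier_mat N N" by (induction js) auto
  have j: "1 \<le> j" "j \<le> n - k" using Cons.prems by auto
  have "foldr (\<lambda>j M. syndrome_factor s j * M) (j # js) (1\<^sub>m N) * ?X = syndrome_factor s j * (?R * ?X)"
    using X R by (simp add: assoc_mult_mat[of _ N N _ N _ Nlog])
  also have "\<dots> = (if \<forall>j\<in>set js. s ! (j - 1) = syndrome n k U E ! (j - 1) then 1 else 0)
      \<cdot>\<^sub>m (syndrome_factor s j * ?X)"
    using Cons X by (simp add: mult_smult_distrib[of _ N N _ Nlog])
  also have "\<dots> = (if \<forall>j\<in>set (j # js). s ! (j - 1) = syndrome n k U E ! (j - 1) then 1 else 0) \<cdot>\<^sub>m ?X"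
    using X by (simp add: syndrome_factor_encoded_error[OF E j] smult_smult_mat)
  finally show ?case .
qed

lemma proj_encoded_error:
  assumes E: "E \<in> paulis n" and s: "length s = n - k"
  shows "proj n k U s * (pmat E * (U * ancilla_embed))
       = (if syndrome n k U E = s then 1 else 0) \<cdot>\<^sub>m (pmat E * (U * ancilla_embed))"
    and "adj (proj n k U s) * (pmat E * (U * ancilla_embed))
       = (if syndrome n k U E = s then 1 else 0) \<cdot>\<^sub>m (pmat E * (U * ancilla_embed))"
proof -
  have all_bits: "(\<forall>j\<in>set [1..<n-k+1]. s ! (j - 1) = syndrome n k U E ! (j - 1)) \<longleftrightarrow> syndrome n k U E = s"
  proof
    assume bits: "\<forall>j\<in>set [1..<n-k+1]. s ! (j - 1) = syndrome n k U E ! (j - 1)"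
    show "syndrome n k U E = s"
    proof (rule nth_equalityI)
      fix i assume "i < length (syndrome n k U E)"
      then have "Suc i \<in> set [1..<n-k+1]" by (simp del: upt_Suc)
      then show "syndrome n k U E ! i = s ! i" using bits by fastforce
    qed (use s in simp)
  qed auto
  have "proj n k U s * (pmat E * (U * ancilla_embed))
      = (if \<forall>j\<in>set [1..<n-k+1]. s ! (j - 1) = syndrome n k U E ! (j - 1) then 1 else 0)
        \<cdot>\<^sub>m (pmat E * (U * ancilla_embed))"
    unfolding proj_eq_foldr by (rule foldr_syndrome_factors_encoded_error[OF E]) auto
  then show "proj n k U s * (pmat E * (U * ancilla_embed))
      = (if syndrome n k U E = s then 1 else 0) \<cdot>\<^sub>m (pmat E * (U * ancilla_embed))"
    by (simp only: all_bits)
  have "adj (proj n k U s) = foldr (\<lambda>j M. syndrome_factor s j * M) (rev [1..<n-k+1]) (1\<^sub>m N)"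
    unfolding proj_eq_foldr by (rule adj_foldr_mult) (auto simp: adj_syndrome_factor)
  moreover have "foldr (\<lambda>j M. syndrome_factor s j * M) (rev [1..<n-k+1]) (1\<^sub>m N) * (pmat E * (U * ancilla_embed))
      = (if \<forall>j\<in>set (rev [1..<n-k+1]). s ! (j - 1) = syndrome n k U E ! (j - 1) then 1 else 0)
        \<cdot>\<^sub>m (pmat E * (U * ancilla_embed))"
    by (rule foldr_syndrome_factors_encoded_error[OF E]) auto
  ultimately show "adj (proj n k U s) * (pmat E * (U * ancilla_embed))
      = (if syndrome n k U E = s then 1 else 0) \<cdot>\<^sub>m (pmat E * (U * ancilla_embed))"
    by (simp only: all_bits set_rev)
qed

lemma commute_gen_iff_conj:
  assumes "X \<in> carrier_mat N N" "1 \<le> j"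
  shows "X * gen n k U j = gen n k U j * X \<longleftrightarrow>
    (adj U * X * U) * pmat (ancilla_zstring n k {j}) = pmat (ancilla_zstring n k {j}) * (adj U * X * U)"
  unfolding gen_eq_conj[OF assms(2)] by (rule unitary_conj_commute_iff[OF unitary_U assms(1)]) simp

lemma pmat_commute_ancilla_Z_iff:
  assumes "R \<in> paulis n" "1 \<le> j" "j \<le> n - k"
  shows "pmat R * pmat (ancilla_zstring n k {j}) = pmat (ancilla_zstring n k {j}) * pmat R
    \<longleftrightarrow> R ! (k + j - 1) \<in> {PI, PZ}"
proof -
  have len: "length R = length (ancilla_zstring n k {j})" using assms(1) k_le_n by (simp add: paulis_def)
  have t: "k + j - 1 < length R" using assms k_le_n by (simp add: paulis_def)
  have "ancilla_zstring n k {j} ! i = PI" if "i < length R" "i \<noteq> k + j - 1" for i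
    using that assms k_le_n by (auto simp: ancilla_zstring_def zstring_def nth_append paulis_def)
  moreover have "ancilla_zstring n k {j} ! (k + j - 1) = PZ"
    using assms k_le_n by (simp add: ancilla_zstring_def zstring_def nth_append)
  ultimately have "psign R (ancilla_zstring n k {j}) = pauli_sign (R ! (k + j - 1)) PZ"
    using psign_single[OF len t] by simp
  then show ?thesis
    unfolding pmat_commute_iff[OF len] by (cases "R ! (k + j - 1)") (auto simp: pauli_sign_def)
qed

lemma eq_ancilla_zstring:
  assumes R: "R \<in> paulis n" and data: "set (take k R) \<subseteq> {PI}"
    and anc: "\<And>j. 1 \<le> j \<Longrightarrow> j \<le> n - k \<Longrightarrow> R ! (k + j - 1) \<in> {PI, PZ}"
  shows "R = ancilla_zstring n k {j. 1 \<le> j \<and> j \<le> n - k \<and> R ! (k + j - 1) = PZ}"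
proof (rule nth_equalityI)
  show "length R = length (ancilla_zstring n k {j. 1 \<le> j \<and> j \<le> n - k \<and> R ! (k + j - 1) = PZ})"
    using R k_le_n by (simp add: paulis_def)
  fix i assume i: "i < length R"
  show "R ! i = ancilla_zstring n k {j. 1 \<le> j \<and> j \<le> n - k \<and> R ! (k + j - 1) = PZ} ! i"
  proof (cases "i < k")
    case True
    then have "R ! i \<in> set (take k R)" using i by (metis in_set_conv_nth length_take min_less_iff_conj nth_take)
    then show ?thesis using True data by (auto simp: ancilla_zstring_def nth_append)
  next
    case False
    let ?j = "i - k + 1"
    have j: "1 \<le> ?j" "?j \<le> n - k" "k + ?j - 1 = i" using False i R by (auto simp: paulis_def)
    then show ?thesis
      using False i R k_le_n anc[OF j(1,2)] by (auto simp: ancilla_zstring_def zstring_def nth_append paulis_def)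
  qed
qed

end

section \<open>Decoding\<close>

locale stabilizer_code_decoder = stabilizer_code +
  fixes Es :: "bool list \<Rightarrow> pauli list"
  assumes syndrome_reps: "syndrome_reps n k U Es"

begin

lemma Es_paulis: "length s = n - k \<Longrightarrow> Es s \<in> paulis n"
  using syndrome_reps by (simp add: syndrome_reps_def syndromes_def)

lemma syndrome_Es: "length s = n - k \<Longrightarrow> syndrome n k U (Es s) = s"
  using syndrome_reps by (simp add: syndrome_reps_def syndromes_def)

lemma Es_carrier [simp]: "s \<in> syndromes (n - k) \<Longrightarrow> pmat (Es s) \<in> carrier_mat N N"
  using Es_paulis by (simp add: syndromes_def)

abbreviation correction :: "pauli list \<Rightarrow> pauli list" where
  "correction E \<equiv> Es (syndrome n k U E)"

lemma correction_paulis: "correction E \<in> paulis n"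
  by (simp add: Es_paulis)

text \<open>The operator adj U E(s) E U that the decoder leaves behind after an error E of syndrome s.\<close>

definition residual :: "pauli list \<Rightarrow> complex mat" where
  "residual E = adj U * pmat (correction E) * pmat E * U"

lemma residual_eq: "E \<in> paulis n \<Longrightarrow> residual E = adj U * (pmat (correction E) * pmat E) * U"
  using correction_paulis by (simp add: residual_def assoc_mult_mat[of _ N N _ N _ N])

lemma correction_commute_gen:
  assumes E: "E \<in> paulis n" and j: "1 \<le> j" "j \<le> n - k"
  shows "(pmat (correction E) * pmat E) * gen n k U j = gen n k U j * (pmat (correction E) * pmat E)"
proof -
  let ?G = "gen n k U j" and ?h = "correction E"
  have H: "pmat ?h \<in> carrier_mat N N" and PE: "pmat E \<in> carrier_mat N N"
    using E correction_paulis by auto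
  define \<tau> :: complex where "\<tau> = (if syndrome n k U E ! (j - 1) then -1 else 1)"
  have hG: "pmat ?h * ?G = \<tau> \<cdot>\<^sub>m (?G * pmat ?h)"
    using pmat_gen_commute[OF correction_paulis j] syndrome_Es by (simp add: \<tau>_def)
  have EG: "pmat E * ?G = \<tau> \<cdot>\<^sub>m (?G * pmat E)"
    using pmat_gen_commute[OF E j] by (simp add: \<tau>_def)
  have "(pmat ?h * pmat E) * ?G = \<tau> \<cdot>\<^sub>m ((pmat ?h * ?G) * pmat E)"
    using H PE by (simp add: EG assoc_mult_mat[of _ N N _ N _ N] mult_smult_distrib[of _ N N _ N])
  also have "\<dots> = (\<tau> * \<tau>) \<cdot>\<^sub>m (?G * (pmat ?h * pmat E))"
    using H PE by (simp add: hG assoc_mult_mat[of _ N N _ N _ N] mult_smult_assoc_mat[of _ N N _ N] smult_smult_mat)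
  finally show ?thesis by (simp add: \<tau>_def)
qed

lemma residual_commute_ancilla_Z:
  assumes E: "E \<in> paulis n" and j: "1 \<le> j" "j \<le> n - k"
  shows "residual E * pmat (ancilla_zstring n k {j}) = pmat (ancilla_zstring n k {j}) * residual E"
proof -
  show ?thesis
    unfolding residual_eq[OF E]
    using correction_commute_gen[OF E j] commute_gen_iff_conj[OF _ j(1)] E correction_paulis by simp
qed

lemma residual_eq_pauli:
  assumes E: "E \<in> paulis n"
  shows "\<exists>R c. R \<in> paulis n \<and> cmod c = 1 \<and> residual E = c \<cdot>\<^sub>m pmat R"
proof -
  let ?h = "correction E"
  have len: "length ?h = length E" and prod: "ptimes ?h E \<in> paulis n"
    using E correction_paulis by (simp_all add: paulis_def)
  obtain R c where R: "R \<in> paulis n" "cmod c = 1" "adj U * pmat (ptimes ?h E) * U = c \<cdot>\<^sub>m pmat R"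
    using clifford_adj_conj_pauli[OF clifford_U prod] by blast
  have "residual E = adj U * (pphase ?h E \<cdot>\<^sub>m pmat (ptimes ?h E)) * U"
    using E correction_paulis by (simp add: residual_def assoc_mult_mat[of _ N N _ N _ N] pmat_mult[OF len])
  also have "\<dots> = (pphase ?h E * c) \<cdot>\<^sub>m pmat R"
    using prod R(3) smult_sandwich[of "adj U" N "pmat (ptimes ?h E)" U "pphase ?h E"]
    by (simp add: smult_smult_mat)
  finally show ?thesis
    using R norm_pphase[OF len] by (intro exI[of _ R] exI[of _ "pphase ?h E * c"]) (simp add: norm_mult)
qed

lemma syndrome_mult_stabilizer:
  assumes h: "h \<in> paulis n" and E: "E \<in> paulis n" and g: "g \<in> stabilizer n k U"
    and c: "c \<noteq> 0" and hg: "pmat h * g = c \<cdot>\<^sub>m pmat E"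
  shows "syndrome n k U E = syndrome n k U h"
proof (rule nth_equalityI)
  fix i assume "i < length (syndrome n k U E)"
  then have j: "1 \<le> Suc i" "Suc i \<le> n - k" by auto
  let ?G = "gen n k U (Suc i)"
  have H: "pmat h \<in> carrier_mat N N" and PE: "pmat E \<in> carrier_mat N N" and G: "g \<in> carrier_mat N N"
    using h E stabilizer_carrier[OF g] by auto
  have "pmat E = (1/c) \<cdot>\<^sub>m (pmat h * g)" using hg c by (simp add: smult_smult_mat)
  then have "pmat E * ?G = ?G * pmat E \<longleftrightarrow> (pmat h * g) * ?G = ?G * (pmat h * g)"
    using commute_smult_iff[of "1/c" "pmat h * g" N ?G] c H G by simp
  also have "\<dots> \<longleftrightarrow> pmat h * ?G = ?G * pmat h"
    using commute_mult_involution_iff[OF H gen_carrier G] stabilizer_commute_gen[OF g j(1)] stabilizer_square[OF g]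
    by simp
  finally show "syndrome n k U E ! i = syndrome n k U h ! i"
    using syndrome_nth[OF j, of E] syndrome_nth[OF j, of h] by simp
qed simp

lemma correction_mult_eq_conj_residual:
  assumes "E \<in> paulis n"
  shows "pmat (correction E) * pmat E = U * residual E * adj U"
  unfolding residual_eq[OF assms]
  by (rule unitary_conj_cancel(2)[symmetric, OF unitary_U]) (use assms correction_paulis in simp)

lemma residual_of_TS_set:
  assumes "E \<in> TS_set n k U Es"
  shows "\<exists>J c. c \<noteq> 0 \<and> residual E = c \<cdot>\<^sub>m pmat (ancilla_zstring n k J)"
proof -
  obtain s g c where s: "length s = n - k" and g: "g \<in> stabilizer n k U" and c: "c \<noteq> 0"
    and hg: "pmat (Es s) * g = c \<cdot>\<^sub>m pmat E" and E: "E \<in> paulis n"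
    using assms unfolding TS_set_def rep_set_def syndromes_def by blast
  obtain J where J: "g = U * pmat (ancilla_zstring n k J) * adj U"
    using g stabilizer_iff by blast
  let ?h = "correction E"
  have H: "pmat ?h \<in> carrier_mat N N" and G: "g \<in> carrier_mat N N"
    using correction_paulis stabilizer_carrier[OF g] by auto
  have "?h = Es s"
    using syndrome_mult_stabilizer[OF Es_paulis[OF s] E g c hg] syndrome_Es[OF s] by simp
  then have "pmat ?h * pmat E = (1/c) \<cdot>\<^sub>m (pmat ?h * (pmat ?h * g))"
    using hg c H E G by (simp add: mult_smult_distrib[of _ N N _ N] smult_smult_mat)
  also have "\<dots> = (1/c) \<cdot>\<^sub>m g"
    using H G correction_paulis pmat_square[of ?h]
    by (simp add: assoc_mult_mat[of _ N N _ N _ N, symmetric] paulis_def)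
  finally have "residual E = adj U * ((1/c) \<cdot>\<^sub>m (U * pmat (ancilla_zstring n k J) * adj U)) * U"
    using E by (simp add: residual_eq J)
  also have "\<dots> = (1/c) \<cdot>\<^sub>m pmat (ancilla_zstring n k J)"
    using smult_sandwich[of "adj U" N "U * pmat (ancilla_zstring n k J) * adj U" U "1/c"]
    by (simp add: unitary_conj_cancel(1)[OF unitary_U])
  finally show ?thesis using c by (intro exI[of _ J] exI[of _ "1/c"]) simp
qed

lemma TS_set_of_residual:
  assumes E: "E \<in> paulis n" and c: "c \<noteq> 0"
    and res: "residual E = c \<cdot>\<^sub>m pmat (ancilla_zstring n k J)"
  shows "E \<in> TS_set n k U Es"
proof -
  let ?h = "correction E" and ?g = "U * pmat (ancilla_zstring n k J) * adj U"
  have H: "pmat ?h \<in> carrier_mat N N" and PE: "pmat E \<in> carrier_mat N N"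
    using E correction_paulis by auto
  have "pmat ?h * pmat E = c \<cdot>\<^sub>m ?g"
    using correction_mult_eq_conj_residual[OF E] res
      smult_sandwich[of U N "pmat (ancilla_zstring n k J)" "adj U" c] by simp
  then have "pmat ?h * (pmat ?h * pmat E) = c \<cdot>\<^sub>m (pmat ?h * ?g)"
    using H by (simp add: mult_smult_distrib[of _ N N _ N])
  moreover have "pmat ?h * (pmat ?h * pmat E) = pmat E"
    using H PE correction_paulis pmat_square[of ?h]
    by (simp add: assoc_mult_mat[of _ N N _ N _ N, symmetric] left_mult_one_mat paulis_def)
  ultimately have "pmat ?h * ?g = (1/c) \<cdot>\<^sub>m pmat E"
    using c by (simp add: smult_smult_mat)
  moreover have "?h \<in> rep_set (n - k) Es"
    by (simp add: rep_set_def syndrome_in_syndromes)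
  moreover have "?g \<in> stabilizer n k U"
    using stabilizer_iff by blast
  ultimately show ?thesis
    unfolding TS_set_def using E c by (intro CollectI conjI bexI[of _ ?h] bexI[of _ ?g] exI[of _ "1/c"]) auto
qed

lemma TS_set_iff_residual:
  assumes E: "E \<in> paulis n" and R: "R \<in> paulis n" and c: "c \<noteq> 0"
    and res: "residual E = c \<cdot>\<^sub>m pmat R"
  shows "E \<in> TS_set n k U Es \<longleftrightarrow> set (take k R) \<subseteq> {PI}"
proof
  assume "E \<in> TS_set n k U Es"
  then obtain J c' where "c' \<noteq> 0" "c \<cdot>\<^sub>m pmat R = c' \<cdot>\<^sub>m pmat (ancilla_zstring n k J)"
    using residual_of_TS_set res by metis
  then have "R = ancilla_zstring n k J"
    using pmat_smult_inj[OF _ _ c] R k_le_n by (simp add: paulis_def)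
  then show "set (take k R) \<subseteq> {PI}"
    by (simp add: ancilla_zstring_def set_replicate_conv_if)
next
  have PR: "pmat R \<in> carrier_mat N N" using R by simp
  assume "set (take k R) \<subseteq> {PI}"
  moreover have "R ! (k + j - 1) \<in> {PI, PZ}" if "1 \<le> j" "j \<le> n - k" for j
    using residual_commute_ancilla_Z[OF E that] commute_smult_iff[OF c PR]
      pmat_commute_ancilla_Z_iff[OF R that] res by simp
  ultimately obtain J where "R = ancilla_zstring n k J"
    using eq_ancilla_zstring[OF R] by blast
  then show "E \<in> TS_set n k U Es"
    using TS_set_of_residual[OF E c] res by simp
qed

lemma residual_block_trace:
  assumes E: "E \<in> paulis n"
  shows "(\<Sum>l<Nanc. (\<Sum>i<Nlog. residual E $$ (i*Nanc + l, i*Nanc))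
                   * cnj (\<Sum>j<Nlog. residual E $$ (j*Nanc + l, j*Nanc)))
       = (if E \<in> TS_set n k U Es then of_nat Nlog * of_nat Nlog else 0)"
proof -
  obtain R c where R: "R \<in> paulis n" "cmod c = 1" "residual E = c \<cdot>\<^sub>m pmat R"
    using residual_eq_pauli[OF E] by blast
  have cc: "c * cnj c = 1" using R(2) by (metis complex_norm_square of_real_1 power_one)
  have len: "length (take k R) = k" "length (drop k R) = n - k" "length R = n"
    using R(1) k_le_n by (simp_all add: paulis_def)
  have entry: "residual E $$ (i*Nanc + l, i'*Nanc) = c * pmat (take k R @ drop k R) $$ (i*Nanc + l, i'*Nanc)"
    if "i < Nlog" "i' < Nlog" "l < Nanc" for i i' l
    using R(3) len index_lt_N[OF that(1,3)] index_lt_N[OF that(2), of 0] by simp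
  have "(\<Sum>l<Nanc. (\<Sum>i<Nlog. residual E $$ (i*Nanc + l, i*Nanc))
                   * cnj (\<Sum>j<Nlog. residual E $$ (j*Nanc + l, j*Nanc)))
      = (c * cnj c) * (\<Sum>l<Nanc. (\<Sum>i<Nlog. pmat (take k R @ drop k R) $$ (i*Nanc + l, i*Nanc))
                   * cnj (\<Sum>j<Nlog. pmat (take k R @ drop k R) $$ (j*Nanc + l, j*Nanc)))"
    by (simp add: entry sum_distrib_left sum_distrib_right mult_ac)
  also have "\<dots> = (if set (take k R) \<subseteq> {PI} then of_nat Nlog * of_nat Nlog else 0)"
    using pmat_append_block_trace[of "take k R" "drop k R"] len cc by simp
  moreover have "c \<noteq> 0" using R(2) by auto
  ultimately show ?thesis
    using TS_set_iff_residual[OF E R(1) _ R(3)] by simp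
qed

lemma encode_ebasis:
  "i < Nlog \<Longrightarrow> j < Nlog \<Longrightarrow> encode n k U (ebasis Nlog i j) = U * ebasis N (i*Nanc) (j*Nanc) * adj U"
  unfolding encode_def zero_proj_eq_ebasis using kron_ebasis[of i Nlog j 0 Nanc] Nlog_Nanc by simp

lemma index_decode:
  assumes "i < Nlog" "j < Nlog"
  shows "decode n k U Es X $$ (i,j) = (\<Sum>l<Nanc. \<Sum>s\<in>syndromes (n - k).
     (adj U * pmat (Es s) * proj n k U s * X * proj n k U s * adj (pmat (Es s)) * U) $$ (i*Nanc + l, j*Nanc + l))"
  unfolding decode_def ptrace2_def using assms index_lt_N by simp

lemma index_decode_branch_left:
  assumes s: "length s = n - k" and E: "E \<in> paulis n" and x: "x < N" and i: "i < Nlog"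
  shows "(adj U * pmat (Es s) * proj n k U s * pmat E * U) $$ (x, i*Nanc)
       = (if syndrome n k U E = s then residual E $$ (x, i*Nanc) else 0)"
proof -
  have H: "pmat (Es s) \<in> carrier_mat N N" and PE: "pmat E \<in> carrier_mat N N"
    using Es_paulis[OF s] E by auto
  let ?T = "adj U * pmat (Es s) * proj n k U s * pmat E * U"
  have T: "?T \<in> carrier_mat N N" using H PE by simp
  have "?T $$ (x, i*Nanc) = (?T * ancilla_embed) $$ (x,i)"
    by (rule index_mult_ancilla_embed[OF T x i, symmetric])
  also have "?T * ancilla_embed = (adj U * pmat (Es s)) * (proj n k U s * (pmat E * (U * ancilla_embed)))"
    using H PE by (simp add: assoc_mult_mat[of _ N N _ N _ N] assoc_mult_mat[of _ N N _ N _ Nlog])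
  also have "\<dots> = (if syndrome n k U E = s then 1 else 0)
      \<cdot>\<^sub>m ((adj U * pmat (Es s) * pmat E * U) * ancilla_embed)"
    using H PE by (simp add: proj_encoded_error(1)[OF E s] mult_smult_distrib[of _ N N _ Nlog]
        assoc_mult_mat[of _ N N _ N _ N] assoc_mult_mat[of _ N N _ N _ Nlog])
  finally show ?thesis
    using x i H PE index_mult_ancilla_embed[of "adj U * pmat (Es s) * pmat E * U" N x i]
    by (auto simp: residual_def)
qed

lemma index_decode_branch_right:
  assumes s: "length s = n - k" and E: "E \<in> paulis n" and y: "y < N" and j: "j < Nlog"
  shows "(adj U * pmat E * (proj n k U s * adj (pmat (Es s)) * U)) $$ (j*Nanc, y)
       = (if syndrome n k U E = s then cnj (residual E $$ (y, j*Nanc)) else 0)"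
proof -
  have H: "pmat (Es s) \<in> carrier_mat N N" and PE: "pmat E \<in> carrier_mat N N"
    using Es_paulis[OF s] E by auto
  let ?T = "adj U * pmat (Es s) * adj (proj n k U s) * pmat E * U"
  have T: "?T \<in> carrier_mat N N" using H PE by simp
  have "adj ?T = adj U * pmat E * (proj n k U s * adj (pmat (Es s)) * U)"
    using H PE by (simp add: adj_mult[of _ N N _ N] adj_pmat assoc_mult_mat[of _ N N _ N _ N])
  moreover have "adj ?T $$ (j*Nanc, y) = cnj (?T $$ (y, j*Nanc))"
    using T y index_lt_N[OF j, of 0] by simp
  ultimately have "(adj U * pmat E * (proj n k U s * adj (pmat (Es s)) * U)) $$ (j*Nanc, y)
      = cnj ((?T * ancilla_embed) $$ (y,j))"
    using index_mult_ancilla_embed[OF T y j] by simp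
  also have "?T * ancilla_embed = (adj U * pmat (Es s)) * (adj (proj n k U s) * (pmat E * (U * ancilla_embed)))"
    using H PE by (simp add: assoc_mult_mat[of _ N N _ N _ N] assoc_mult_mat[of _ N N _ N _ Nlog])
  also have "\<dots> = (if syndrome n k U E = s then 1 else 0)
      \<cdot>\<^sub>m ((adj U * pmat (Es s) * pmat E * U) * ancilla_embed)"
    using H PE by (simp add: proj_encoded_error(2)[OF E s] mult_smult_distrib[of _ N N _ Nlog]
        assoc_mult_mat[of _ N N _ N _ N] assoc_mult_mat[of _ N N _ N _ Nlog])
  finally show ?thesis
    using y j H PE index_mult_ancilla_embed[of "adj U * pmat (Es s) * pmat E * U" N y j]
    by (auto simp: residual_def)
qed

lemma index_branch_error_sandwich:
  assumes s: "s \<in> syndromes (n - k)" and E: "E \<in> paulis n"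
    and i: "i < Nlog" and j: "j < Nlog" and l: "l < Nanc"
  shows "(adj U * pmat (Es s) * proj n k U s * (pmat E * (U * ebasis N (i*Nanc) (j*Nanc) * adj U) * pmat E)
           * proj n k U s * adj (pmat (Es s)) * U) $$ (i*Nanc + l, j*Nanc + l)
       = (if syndrome n k U E = s
          then residual E $$ (i*Nanc + l, i*Nanc) * cnj (residual E $$ (j*Nanc + l, j*Nanc)) else 0)"
proof -
  let ?A = "adj U * pmat (Es s) * proj n k U s * pmat E * U"
  let ?B = "adj U * pmat E * (proj n k U s * adj (pmat (Es s)) * U)"
  have P: "pmat E \<in> carrier_mat N N" "pmat (Es s) \<in> carrier_mat N N" using s E by auto
  have "adj U * pmat (Es s) * proj n k U s * (pmat E * (U * ebasis N (i*Nanc) (j*Nanc) * adj U) * pmat E)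
           * proj n k U s * adj (pmat (Es s)) * U = 1 \<cdot>\<^sub>m (?A * ebasis N (i*Nanc) (j*Nanc) * ?B)"
    using P by (simp add: assoc_mult_mat[of _ N N _ N _ N])
  then show ?thesis
    using index_sandwich_ebasis[of ?A N N ?B N "i*Nanc" "j*Nanc" "i*Nanc + l" "j*Nanc + l" 1] P s E
      index_lt_N[OF i, of 0] index_lt_N[OF j, of 0] index_lt_N[OF i l] index_lt_N[OF j l]
      index_decode_branch_left[of s E "i*Nanc + l" i] index_decode_branch_right[of s E "j*Nanc + l" j] i j
    by (simp add: syndromes_def)
qed

lemma index_decode_noise_encode:
  assumes i: "i < Nlog" and j: "j < Nlog"
  shows "decode n k U Es (depol n p (encode n k U (ebasis Nlog i j))) $$ (i,j)
    = (\<Sum>l<Nanc. \<Sum>E\<in>paulis n. complex_of_real (perr p E)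
         * (residual E $$ (i*Nanc + l, i*Nanc) * cnj (residual E $$ (j*Nanc + l, j*Nanc))))"
proof -
  let ?X = "\<lambda>E. pmat E * (U * ebasis N (i*Nanc) (j*Nanc) * adj U) * pmat E"
  let ?L = "\<lambda>s. adj U * pmat (Es s) * proj n k U s" and ?R = "\<lambda>s. proj n k U s * adj (pmat (Es s)) * U"
  let ?Y = "msum N (\<lambda>E. complex_of_real (perr p E) \<cdot>\<^sub>m ?X E) (paulis n)"
  have noise: "depol n p (encode n k U (ebasis Nlog i j)) = ?Y"
    unfolding encode_ebasis[OF i j] by (rule depol_kraus) simp
  have branch: "(adj U * pmat (Es s) * proj n k U s * ?Y * proj n k U s * adj (pmat (Es s)) * U) $$ (i*Nanc + l, j*Nanc + l)
      = (\<Sum>E\<in>paulis n. complex_of_real (perr p E) *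
         (adj U * pmat (Es s) * proj n k U s * ?X E * proj n k U s * adj (pmat (Es s)) * U) $$ (i*Nanc + l, j*Nanc + l))"
    if s: "s \<in> syndromes (n - k)" and l: "l < Nanc" for s l
  proof -
    have C: "?L s \<in> carrier_mat N N" "?R s \<in> carrier_mat N N" "\<And>E. E \<in> paulis n \<Longrightarrow> ?X E \<in> carrier_mat N N"
      using s by auto
    have assoc: "adj U * pmat (Es s) * proj n k U s * M * proj n k U s * adj (pmat (Es s)) * U = ?L s * M * ?R s"
      if "M \<in> carrier_mat N N" for M
      using that s by (simp add: assoc_mult_mat[of _ N N _ N _ N])
    have "?L s * ?Y * ?R s = msum N (\<lambda>E. complex_of_real (perr p E) \<cdot>\<^sub>m (?L s * ?X E * ?R s)) (paulis n)"
      using C by (subst msum_sandwich) (auto simp: smult_sandwich intro!: msum_cong)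
    then show ?thesis
      using index_lt_N[OF i l] index_lt_N[OF j l] C by (simp add: assoc)
  qed
  have "decode n k U Es (depol n p (encode n k U (ebasis Nlog i j))) $$ (i,j)
      = (\<Sum>l<Nanc. \<Sum>s\<in>syndromes (n - k). \<Sum>E\<in>paulis n. complex_of_real (perr p E) *
          (if syndrome n k U E = s
           then residual E $$ (i*Nanc + l, i*Nanc) * cnj (residual E $$ (j*Nanc + l, j*Nanc)) else 0))"
    unfolding index_decode[OF i j] noise
    by (intro sum.cong refl) (simp add: branch index_branch_error_sandwich i j)
  also have "\<dots> = (\<Sum>l<Nanc. \<Sum>E\<in>paulis n. \<Sum>s\<in>syndromes (n - k). complex_of_real (perr p E) *
          (if syndrome n k U E = s
           then residual E $$ (i*Nanc + l, i*Nanc) * cnj (residual E $$ (j*Nanc + l, j*Nanc)) else 0))"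
    by (rule sum.cong[OF refl], rule sum.swap)
  finally show ?thesis
    by (simp add: syndrome_in_syndromes if_distrib[of "\<lambda>z. _ * z"] cong: if_cong)
qed

lemma TS_set_subset_paulis: "TS_set n k U Es \<subseteq> paulis n"
  by (auto simp: TS_set_def)

lemma chan_fid_eq_sum_TS_set:
  "chan_fid Nlog (\<lambda>\<rho>. decode n k U Es (depol n p (encode n k U \<rho>)))
   = complex_of_real (\<Sum>E\<in>TS_set n k U Es. perr p E)"
proof -
  let ?w = "\<lambda>E. complex_of_real (perr p E)"
  let ?col = "\<lambda>E l. \<Sum>i<Nlog. residual E $$ (i*Nanc + l, i*Nanc)"
  have "chan_fid Nlog (\<lambda>\<rho>. decode n k U Es (depol n p (encode n k U \<rho>)))
      = (\<Sum>i<Nlog. \<Sum>j<Nlog. decode n k U Es (depol n p (encode n k U (ebasis Nlog i j))) $$ (i,j))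
        / (of_nat Nlog * of_nat Nlog)"
    by (rule chan_fid_diag) (simp add: decode_def ptrace2_def)
  also have "(\<Sum>i<Nlog. \<Sum>j<Nlog. decode n k U Es (depol n p (encode n k U (ebasis Nlog i j))) $$ (i,j))
      = (\<Sum>i<Nlog. \<Sum>j<Nlog. \<Sum>l<Nanc. \<Sum>E\<in>paulis n. ?w E
          * (residual E $$ (i*Nanc + l, i*Nanc) * cnj (residual E $$ (j*Nanc + l, j*Nanc))))"
    by (intro sum.cong refl) (simp add: index_decode_noise_encode)
  also have "\<dots> = (\<Sum>E\<in>paulis n. \<Sum>l<Nanc. \<Sum>i<Nlog. \<Sum>j<Nlog. ?w E
          * (residual E $$ (i*Nanc + l, i*Nanc) * cnj (residual E $$ (j*Nanc + l, j*Nanc))))"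
    by (simp only: sum.swap[where B = "paulis n"], rule sum.cong[OF refl], simp only: sum.swap[where B = "{..<Nanc}"])
  also have "\<dots> = (\<Sum>E\<in>paulis n. ?w E * (\<Sum>l<Nanc. ?col E l * cnj (?col E l)))"
    by (simp only: cnj_sum sum_product, simp only: sum_distrib_left)
  also have "\<dots> = (\<Sum>E\<in>paulis n. if E \<in> TS_set n k U Es then ?w E * (of_nat Nlog * of_nat Nlog) else 0)"
    by (intro sum.cong refl) (simp only: residual_block_trace, simp)
  also have "\<dots> = (\<Sum>E\<in>paulis n \<inter> TS_set n k U Es. ?w E * (of_nat Nlog * of_nat Nlog))"
    by (rule sum.inter_restrict[OF finite_paulis, symmetric])
  also have "\<dots> = (\<Sum>E\<in>TS_set n k U Es. ?w E) * (of_nat Nlog * of_nat Nlog)"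
    using TS_set_subset_paulis by (simp add: Int_absorb1 sum_distrib_right)
  finally show ?thesis by simp
qed

end

section \<open>The weight enumerator\<close>

lemma weight_Cons: "weight (a # E) = (if a = PI then 0 else 1) + weight E"
  by (simp add: weight_def)

lemma perr_eq_weight: "perr p E = (1 - 3/4 * p) ^ (length E - weight E) * (p/4) ^ weight E"
proof (induction E)
  case (Cons a E)
  have "weight E \<le> length E" by (simp add: weight_def)
  then have "Suc (length E) - weight E = Suc (length E - weight E)" by simp
  then show ?case using Cons by (cases "a = PI") (simp_all add: perr_simps weight_Cons pauli_prob_def)
qed (simp add: perr_simps weight_def)

lemma sum_perr_weight_enumerator:
  assumes "T \<subseteq> paulis n"
  shows "(\<Sum>E\<in>T. perr p E) = (\<Sum>w=0..n. real (card {E\<in>T. weight E = w}) * (1 - 3/4 * p) ^ (n - w) * (p/4) ^ w)"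
proof -
  let ?q = "\<lambda>w. (1 - 3/4 * p) ^ (n - w) * (p/4) ^ w"
  have fin: "finite T" by (rule finite_subset[OF assms finite_paulis])
  have len: "length E = n" "weight E \<le> n" if "E \<in> T" for E
    using assms that by (auto simp: paulis_def weight_def)
  have "(\<Sum>E\<in>T. perr p E) = (\<Sum>E\<in>T. ?q (weight E))"
    by (intro sum.cong refl) (simp add: perr_eq_weight len)
  also have "\<dots> = (\<Sum>w\<in>{0..n}. \<Sum>E\<in>{E\<in>T. weight E = w}. ?q (weight E))"
    by (rule sum.group[symmetric]) (use fin len in auto)
  also have "\<dots> = (\<Sum>w\<in>{0..n}. real (card {E\<in>T. weight E = w}) * ?q w)"
  proof (intro sum.cong refl)
    fix w
    have "(\<Sum>E\<in>{E\<in>T. weight E = w}. ?q (weight E)) = (\<Sum>E\<in>{E\<in>T. weight E = w}. ?q w)"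
      by (rule sum.cong) auto
    then show "(\<Sum>E\<in>{E\<in>T. weight E = w}. ?q (weight E)) = real (card {E\<in>T. weight E = w}) * ?q w"
      by simp
  qed
  finally show ?thesis by (simp only: mult.assoc)
qed

theorem theorem4:
  fixes n k :: nat and U :: "complex mat" and Es :: "bool list \<Rightarrow> pauli list" and p :: real
  assumes "k \<le> n"
    and "clifford n U"
    and "syndrome_reps n k U Es"
    and "0 \<le> p" and "p \<le> 1"
  shows "chan_fid (2^k) (\<lambda>\<rho>. decode n k U Es (depol n p (encode n k U \<rho>)))
           = complex_of_real (\<Sum>E\<in>TS_set n k U Es. perr p E)
       \<and> (\<Sum>E\<in>TS_set n k U Es. perr p E)
           = (\<Sum>w=0..n. real (card {E\<in>TS_set n k U Es. weight E = w})
                          * (1 - 3/4 * p) ^ (n - w) * (p/4) ^ w)"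
proof -
  interpret stabilizer_code_decoder n k U Es
    by unfold_locales (use assms in auto)
  show ?thesis
    using chan_fid_eq_sum_TS_set sum_perr_weight_enumerator[OF TS_set_subset_paulis] by simp
qed

end
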